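(* Let $u$ be a strictly convex function of $(x_1,x_2)$ with Legendre transform $u^*(\xi_1,\xi_2)$, where $\xi_i=\partial u/\partial x_i$. Then $u$ satisfies equation (2) associated with $\psi$ if and only if $u^*$ satisfies equation (2) (in the variables $\xi_1,\xi_2$) associated with the function $\psi^*(t)=t\,\psi(t^{-1})$, which is again smooth and strictly convex on $(0,\infty)$.
   Context: For a smooth strictly convex $\psi$ on $(0,\infty)$ and a strictly convex function $u(x_1,\dots,x_n)$ write $u_{ij}=\partial^2u/\partial x_i\partial x_j$, $J=\det(u_{ij})$, and $(u^{ij})$ for the inverse of $(u_{ij})$. Equation (2) associated with $\psi$ is $\sum_{i,j}\frac{\partial^{2}}{\partial x_i\partial x_j}\big(J\psi'(J)u^{ij}\big)=0$, the Euler–Lagrange equation of $\int\psi(J)\,dx$. The Legendre transform is $u^*(\xi)=\sum_i x_i\xi_i-u(x)$ with $\xi=\nabla u(x)$. *)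

theory Defs
  imports "HOL-Analysis.Analysis"
begin

definition strict_convex_on :: "'a::real_vector set \<Rightarrow> ('a \<Rightarrow> real) \<Rightarrow> bool" where
  "strict_convex_on S f \<longleftrightarrow> convex S \<and>
     (\<forall>x\<in>S. \<forall>y\<in>S. \<forall>t. x \<noteq> y \<longrightarrow> 0 < t \<longrightarrow> t < 1 \<longrightarrow>
        f ((1 - t) *\<^sub>R x + t *\<^sub>R y) < (1 - t) * f x + t * f y)"

definition smooth1_on :: "real set \<Rightarrow> (real \<Rightarrow> real) \<Rightarrow> bool" where
  "smooth1_on S f \<longleftrightarrow> (\<forall>k. \<forall>x\<in>S. (deriv ^^ k) f differentiable (at x))"

definition pd :: "nat \<Rightarrow> (real \<times> real \<Rightarrow> real) \<Rightarrow> real \<times> real \<Rightarrow> real" where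
  "pd i f p = (if i = 1 then deriv (\<lambda>s. f (s, snd p)) (fst p)
               else deriv (\<lambda>t. f (fst p, t)) (snd p))"

fun Ck_on :: "nat \<Rightarrow> (real \<times> real) set \<Rightarrow> (real \<times> real \<Rightarrow> real) \<Rightarrow> bool" where
  "Ck_on 0 S f = continuous_on S f"
| "Ck_on (Suc k) S f = ((\<forall>p\<in>S. f differentiable (at p)) \<and> Ck_on k S (pd 1 f) \<and> Ck_on k S (pd 2 f))"

definition smooth2_on :: "(real \<times> real) set \<Rightarrow> (real \<times> real \<Rightarrow> real) \<Rightarrow> bool" where
  "smooth2_on S f \<longleftrightarrow> (\<forall>k. Ck_on k S f)"

definition hess :: "(real \<times> real \<Rightarrow> real) \<Rightarrow> nat \<Rightarrow> nat \<Rightarrow> real \<times> real \<Rightarrow> real" where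
  "hess u i j p = pd i (pd j u) p"

definition hessdet :: "(real \<times> real \<Rightarrow> real) \<Rightarrow> real \<times> real \<Rightarrow> real" where
  "hessdet u p = hess u 1 1 p * hess u 2 2 p - hess u 1 2 p * hess u 2 1 p"

definition hessinv :: "(real \<times> real \<Rightarrow> real) \<Rightarrow> nat \<Rightarrow> nat \<Rightarrow> real \<times> real \<Rightarrow> real" where
  "hessinv u i j p =
     (if i = 1 \<and> j = 1 then hess u 2 2 p
      else if i = 2 \<and> j = 2 then hess u 1 1 p
      else - hess u i j p) / hessdet u p"

definition eq2_lhs :: "(real \<Rightarrow> real) \<Rightarrow> (real \<times> real \<Rightarrow> real) \<Rightarrow> real \<times> real \<Rightarrow> real" where
  "eq2_lhs \<psi> u p = (\<Sum>i\<in>{1,2}. \<Sum>j\<in>{1,2}.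
      pd i (pd j (\<lambda>q. hessdet u q * deriv \<psi> (hessdet u q) * hessinv u i j q)) p)"

definition satisfies_eq2 :: "(real \<Rightarrow> real) \<Rightarrow> (real \<times> real) set \<Rightarrow> (real \<times> real \<Rightarrow> real) \<Rightarrow> bool" where
  "satisfies_eq2 \<psi> S u \<longleftrightarrow> (\<forall>p\<in>S. eq2_lhs \<psi> u p = 0)"

definition grad :: "(real \<times> real \<Rightarrow> real) \<Rightarrow> real \<times> real \<Rightarrow> real \<times> real" where
  "grad u p = (pd 1 u p, pd 2 u p)"

definition is_legendre_transform ::
  "(real \<times> real) set \<Rightarrow> (real \<times> real \<Rightarrow> real) \<Rightarrow> (real \<times> real \<Rightarrow> real) \<Rightarrow> bool" where
  "is_legendre_transform S u ustar \<longleftrightarrow>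
     (\<forall>x\<in>S. ustar (grad u x) = fst x * fst (grad u x) + snd x * snd (grad u x) - u x)"

definition psi_star :: "(real \<Rightarrow> real) \<Rightarrow> real \<Rightarrow> real" where
  "psi_star \<psi> t = t * \<psi> (inverse t)"

end

theory Submission
  imports Defs
begin

text \<open>
  Write \<open>J = det(u\<^sub>i\<^sub>j)\<close> and \<open>L\<^sub>\<psi>(u) = \<Sum>\<^sub>i\<^sub>j \<partial>\<^sub>i\<partial>\<^sub>j(J\<psi>'(J)u\<^sup>i\<^sup>j)\<close>.  Since \<open>J u\<^sup>i\<^sup>j\<close> is the
  cofactor matrix of the Hessian, whose rows and columns are divergence free, one gets
  \<open>L\<^sub>\<psi>(u) = \<Sum>\<^sub>i\<^sub>j cof\<^sup>i\<^sup>j \<partial>\<^sub>i\<partial>\<^sub>j(\<psi>'(J))\<close>.  On the dual side, near \<open>\<xi>\<^sub>0 = \<nabla>u(x\<^sub>0)\<close> the gradient map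
  has a local inverse \<open>g\<close>; then \<open>\<nabla>u\<^sup>* = g\<close>, \<open>(u\<^sup>*)\<^sub>i\<^sub>j = u\<^sup>i\<^sup>j\<close>, \<open>J\<^sup>* = 1/J\<close> and
  \<open>\<partial>/\<partial>\<xi>\<^sub>i = \<Sum>\<^sub>l u\<^sup>l\<^sup>i \<partial>/\<partial>x\<^sub>l\<close>.  The coefficient \<open>J\<^sup>*\<psi>\<^sup>*'(J\<^sup>*)(u\<^sup>*)\<^sup>i\<^sup>j\<close> becomes
  \<open>(\<psi>(J)/J - \<psi>'(J)) u\<^sub>i\<^sub>j\<close>, and a direct computation shows that both sides are expressed by one
  quantity \<open>T\<close> (the dual operator written in the \<open>x\<close> variables):
  \<open>L\<^sub>\<psi>(u)(x) = -J(x) T(x)\<close> and \<open>L\<^sub>\<psi>\<^sub>*(u\<^sup>*)(\<nabla>u(x)) = T(x)\<close>.  As \<open>J > 0\<close> the theorem follows.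
\<close>

lemma pd_has_derivative:
  assumes "(f has_derivative D) (at p)"
  shows "pd 1 f p = D (1,0)" "pd 2 f p = D (0,1)"
proof -
  have lin: "linear D" using assms has_derivative_linear by blast
  have d1: "((\<lambda>s. f (s, snd p)) has_derivative (\<lambda>s. D (s,0))) (at (fst p))"
  proof -
    have "((\<lambda>s. (s, snd p)) has_derivative (\<lambda>s. (s,0))) (at (fst p))"
      by (auto intro!: derivative_eq_intros)
    moreover have "(f has_derivative D) (at (fst p, snd p))" using assms by simp
    ultimately show ?thesis using has_derivative_compose by fastforce
  qed
  have "(\<lambda>s. D (s,0)) = (\<lambda>s. D (1,0) * s)"
  proof
    fix s::real have "(s,0::real) = s *\<^sub>R (1,0)" by simp
    then show "D (s,0) = D (1,0) * s" using linear_scale[OF lin, of s "(1,0)"] by (simp add: mult.commute)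
  qed
  with d1 have "((\<lambda>s. f (s, snd p)) has_real_derivative D (1,0)) (at (fst p))"
    by (simp add: has_field_derivative_def)
  then show "pd 1 f p = D (1,0)" unfolding pd_def by (simp add: DERIV_imp_deriv)
  have d2: "((\<lambda>s. f (fst p, s)) has_derivative (\<lambda>s. D (0,s))) (at (snd p))"
  proof -
    have "((\<lambda>s. (fst p, s)) has_derivative (\<lambda>s. (0,s))) (at (snd p))"
      by (auto intro!: derivative_eq_intros)
    moreover have "(f has_derivative D) (at (fst p, snd p))" using assms by simp
    ultimately show ?thesis using has_derivative_compose by fastforce
  qed
  have "(\<lambda>s. D (0,s)) = (\<lambda>s. D (0,1) * s)"
  proof
    fix s::real have "(0::real,s) = s *\<^sub>R (0,1)" by simp
    then show "D (0,s) = D (0,1) * s" using linear_scale[OF lin, of s "(0,1)"] by (simp add: mult.commute)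
  qed
  with d2 have "((\<lambda>s. f (fst p, s)) has_real_derivative D (0,1)) (at (snd p))"
    by (simp add: has_field_derivative_def)
  then show "pd 2 f p = D (0,1)" unfolding pd_def by (simp add: DERIV_imp_deriv)
qed

lemma has_derivative_pd:
  assumes "f differentiable (at p)"
  shows "(f has_derivative (\<lambda>h. pd 1 f p * fst h + pd 2 f p * snd h)) (at p)"
proof -
  obtain D where D: "(f has_derivative D) (at p)" using assms differentiable_def by blast
  have lin: "linear D" using D has_derivative_linear by blast
  have "D = (\<lambda>h. pd 1 f p * fst h + pd 2 f p * snd h)"
  proof
    fix h :: "real \<times> real"
    have "h = fst h *\<^sub>R (1,0) + snd h *\<^sub>R (0,1)" by (cases h) simp
    then have "D h = D (fst h *\<^sub>R (1,0) + snd h *\<^sub>R (0,1))" by simp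
    also have "\<dots> = fst h * D (1,0) + snd h * D (0,1)"
      by (simp only: linear_add[OF lin] linear_scale[OF lin] real_scaleR_def)
    finally show "D h = pd 1 f p * fst h + pd 2 f p * snd h"
      using pd_has_derivative[OF D] by (simp add: mult.commute)
  qed
  then show ?thesis using D by simp
qed

lemma has_real_derivative_pd1:
  assumes "f differentiable (at (s,y))"
  shows "((\<lambda>s. f (s,y)) has_real_derivative pd 1 f (s,y)) (at s)"
proof -
  have "((\<lambda>s. (s, y)) has_derivative (\<lambda>s. (s,0))) (at s)"
    by (auto intro!: derivative_eq_intros)
  note c = has_derivative_compose[OF this has_derivative_pd[OF assms]]
  have e: "(\<lambda>x. x * c) = (*) c" for c :: real by auto
  show ?thesis using c by (simp add: has_field_derivative_def o_def e)
qed

lemma has_real_derivative_pd2: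
  assumes "f differentiable (at (s,y))"
  shows "((\<lambda>y. f (s,y)) has_real_derivative pd 2 f (s,y)) (at y)"
proof -
  have "((\<lambda>y. (s, y)) has_derivative (\<lambda>y. (0,y))) (at y)"
    by (auto intro!: derivative_eq_intros)
  note c = has_derivative_compose[OF this has_derivative_pd[OF assms]]
  have e: "(\<lambda>x. x * c) = (*) c" for c :: real by auto
  show ?thesis using c by (simp add: has_field_derivative_def o_def e)
qed

text \<open>Every index other than 1 denotes the second partial derivative.\<close>
lemma pd_index_cases: "pd i f p = (if i = 1 then pd 1 f p else pd 2 f p)"
  unfolding pd_def by simp

lemma pd_of_has_derivative:
  assumes "(f has_derivative (\<lambda>h. a * fst h + b * snd h)) (at p)"
  shows "pd i f p = (if i = 1 then a else b)"
  using pd_has_derivative[OF assms] by (subst pd_index_cases) simp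

lemma pd_add:
  assumes "f differentiable (at p)" "g differentiable (at p)"
  shows "pd i (\<lambda>x. f x + g x) p = pd i f p + pd i g p"
proof -
  have "((\<lambda>x. f x + g x) has_derivative (\<lambda>h. (pd 1 f p + pd 1 g p) * fst h + (pd 2 f p + pd 2 g p) * snd h)) (at p)"
    using has_derivative_add[OF has_derivative_pd[OF assms(1)] has_derivative_pd[OF assms(2)]]
    by (simp add: algebra_simps)
  from pd_of_has_derivative[OF this] show ?thesis by (subst (2 3) pd_index_cases) simp
qed

lemma pd_diff:
  assumes "f differentiable (at p)" "g differentiable (at p)"
  shows "pd i (\<lambda>x. f x - g x) p = pd i f p - pd i g p"
proof -
  have "((\<lambda>x. f x - g x) has_derivative (\<lambda>h. (pd 1 f p - pd 1 g p) * fst h + (pd 2 f p - pd 2 g p) * snd h)) (at p)"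
    using has_derivative_diff[OF has_derivative_pd[OF assms(1)] has_derivative_pd[OF assms(2)]]
    by (simp add: algebra_simps)
  from pd_of_has_derivative[OF this] show ?thesis by (subst (2 3) pd_index_cases) simp
qed

lemma pd_mult:
  assumes "f differentiable (at p)" "g differentiable (at p)"
  shows "pd i (\<lambda>x. f x * g x) p = pd i f p * g p + f p * pd i g p"
proof -
  have "((\<lambda>x. f x * g x) has_derivative (\<lambda>h. (pd 1 f p * g p + f p * pd 1 g p) * fst h + (pd 2 f p * g p + f p * pd 2 g p) * snd h)) (at p)"
    using has_derivative_mult[OF has_derivative_pd[OF assms(1)] has_derivative_pd[OF assms(2)]]
    by (simp add: algebra_simps)
  from pd_of_has_derivative[OF this] show ?thesis by (subst (2 3) pd_index_cases) simp
qed

lemma pd_const: "pd i (\<lambda>x. c) p = 0"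
proof -
  have "((\<lambda>x. c) has_derivative (\<lambda>h. 0 * fst h + 0 * snd h)) (at p)" by simp
  from pd_of_has_derivative[OF this] show ?thesis by simp
qed

lemma pd_neg: "f differentiable (at p) \<Longrightarrow> pd i (\<lambda>x. - f x) p = - pd i f p"
  using pd_diff[of "\<lambda>x. 0" p f i] by (simp add: pd_const)

lemma pd_fst: "pd i fst p = (if i = 1 then 1 else 0)"
proof -
  have "(fst has_derivative (\<lambda>h. 1 * fst h + 0 * snd h)) (at p)"
    by (simp add: has_derivative_fst[OF has_derivative_ident, simplified])
  from pd_of_has_derivative[OF this] show ?thesis by simp
qed

lemma pd_snd: "pd i snd p = (if i = 1 then 0 else 1)"
proof -
  have "(snd has_derivative (\<lambda>h. 0 * fst h + 1 * snd h)) (at p)"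
    by (simp add: has_derivative_snd[OF has_derivative_ident, simplified])
  from pd_of_has_derivative[OF this] show ?thesis by simp
qed

lemma pd_chain_real:
  assumes "(\<phi> has_real_derivative d) (at (f p))" "f differentiable (at p)"
  shows "pd i (\<lambda>x. \<phi> (f x)) p = d * pd i f p"
proof -
  have "((\<lambda>x. \<phi> (f x)) has_derivative (\<lambda>h. (d * pd 1 f p) * fst h + (d * pd 2 f p) * snd h)) (at p)"
    using has_derivative_compose[OF has_derivative_pd[OF assms(2)] assms(1)[unfolded has_field_derivative_def]]
    by (simp add: algebra_simps)
  from pd_of_has_derivative[OF this] show ?thesis by (subst (2) pd_index_cases) simp
qed

lemma pd_chain_pair:
  assumes "X1 differentiable (at p)" "X2 differentiable (at p)" "g differentiable (at (X1 p, X2 p))"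
  shows "pd i (\<lambda>x. g (X1 x, X2 x)) p =
     pd 1 g (X1 p, X2 p) * pd i X1 p + pd 2 g (X1 p, X2 p) * pd i X2 p"
proof -
  have X: "((\<lambda>x. (X1 x, X2 x)) has_derivative
      (\<lambda>h. (pd 1 X1 p * fst h + pd 2 X1 p * snd h, pd 1 X2 p * fst h + pd 2 X2 p * snd h))) (at p)"
    using has_derivative_Pair[OF has_derivative_pd[OF assms(1)] has_derivative_pd[OF assms(2)]] by simp
  have "((\<lambda>x. g (X1 x, X2 x)) has_derivative (\<lambda>h.
     (pd 1 g (X1 p, X2 p) * pd 1 X1 p + pd 2 g (X1 p, X2 p) * pd 1 X2 p) * fst h +
     (pd 1 g (X1 p, X2 p) * pd 2 X1 p + pd 2 g (X1 p, X2 p) * pd 2 X2 p) * snd h)) (at p)"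
    using has_derivative_compose[OF X has_derivative_pd[OF assms(3)]]
    by (simp add: algebra_simps)
  from pd_of_has_derivative[OF this] show ?thesis by (subst (3 4) pd_index_cases) simp
qed

lemma pd_cong_open:
  assumes "open U" "p \<in> U" "\<And>x. x \<in> U \<Longrightarrow> f x = g x"
  shows "pd i f p = pd i g p"
proof -
  obtain e where e: "e > 0" "ball p e \<subseteq> U" using assms openE by blast
  have 1: "eventually (\<lambda>s. f (s, snd p) = g (s, snd p)) (nhds (fst p))"
    unfolding eventually_nhds_metric
  proof (intro exI[of _ e] conjI allI impI)
    fix s assume "dist s (fst p) < e"
    then have "(s, snd p) \<in> ball p e"
      by (cases p) (simp add: dist_Pair_Pair dist_commute)
    then show "f (s, snd p) = g (s, snd p)" using e assms(3) by blast
  qed (use e in auto)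
  have 2: "eventually (\<lambda>s. f (fst p, s) = g (fst p, s)) (nhds (snd p))"
    unfolding eventually_nhds_metric
  proof (intro exI[of _ e] conjI allI impI)
    fix s assume "dist s (snd p) < e"
    then have "(fst p, s) \<in> ball p e"
      by (cases p) (simp add: dist_Pair_Pair dist_commute)
    then show "f (fst p, s) = g (fst p, s)" using e assms(3) by blast
  qed (use e in auto)
  show ?thesis unfolding pd_def using deriv_cong_ev[OF 1 refl] deriv_cong_ev[OF 2 refl] by simp
qed

lemma differentiable_cong_open:
  assumes "open U" "p \<in> U" "\<And>x. x \<in> U \<Longrightarrow> f x = g x" "f differentiable (at p)"
  shows "g differentiable (at p)"
  using assms has_derivative_transform_within_open unfolding differentiable_def by blast

section \<open>Symmetry of mixed partial derivatives\<close>

lemma second_difference_pd21: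
  assumes sq: "\<And>s y. a \<le> s \<Longrightarrow> s \<le> a + t \<Longrightarrow> b \<le> y \<Longrightarrow> y \<le> b + t \<Longrightarrow> (s, y) \<in> U"
    and t: "t > 0"
    and df: "\<And>q. q \<in> U \<Longrightarrow> f differentiable (at q)"
    and d1: "\<And>q. q \<in> U \<Longrightarrow> pd 1 f differentiable (at q)"
  obtains s1 y1 where "a < s1" "s1 < a + t" "b < y1" "y1 < b + t"
    "f (a + t, b + t) - f (a + t, b) - f (a, b + t) + f (a, b) = t * (t * pd 2 (pd 1 f) (s1, y1))"
proof -
  obtain s1 where s1: "a < s1" "s1 < a + t"
    and e1: "(\<lambda>s. f (s, b + t) - f (s, b)) (a + t) - (\<lambda>s. f (s, b + t) - f (s, b)) a
             = (a + t - a) * (pd 1 f (s1, b + t) - pd 1 f (s1, b))"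
  proof (atomize_elim, rule MVT2)
    show "a < a + t" using t by simp
    fix s assume "a \<le> s" "s \<le> a + t"
    then have "(s, b + t) \<in> U" "(s, b) \<in> U" using sq t by simp_all
    then show "((\<lambda>s. f (s, b + t) - f (s, b)) has_real_derivative pd 1 f (s, b + t) - pd 1 f (s, b)) (at s)"
      using has_real_derivative_pd1[OF df] by (intro DERIV_diff) simp_all
  qed
  obtain y1 where y1: "b < y1" "y1 < b + t"
    and e2: "(\<lambda>y. pd 1 f (s1, y)) (b + t) - (\<lambda>y. pd 1 f (s1, y)) b = (b + t - b) * pd 2 (pd 1 f) (s1, y1)"
  proof (atomize_elim, rule MVT2)
    show "b < b + t" using t by simp
    fix y assume "b \<le> y" "y \<le> b + t"
    then have "(s1, y) \<in> U" using sq s1 by simp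
    then show "((\<lambda>y. pd 1 f (s1, y)) has_real_derivative pd 2 (pd 1 f) (s1, y)) (at y)"
      using has_real_derivative_pd2[OF d1] by simp
  qed
  show ?thesis using that[OF s1 y1] e1 e2 by (simp add: algebra_simps)
qed

lemma second_difference_pd12:
  assumes sq: "\<And>s y. a \<le> s \<Longrightarrow> s \<le> a + t \<Longrightarrow> b \<le> y \<Longrightarrow> y \<le> b + t \<Longrightarrow> (s, y) \<in> U"
    and t: "t > 0"
    and df: "\<And>q. q \<in> U \<Longrightarrow> f differentiable (at q)"
    and d2: "\<And>q. q \<in> U \<Longrightarrow> pd 2 f differentiable (at q)"
  obtains s2 y2 where "a < s2" "s2 < a + t" "b < y2" "y2 < b + t"
    "f (a + t, b + t) - f (a + t, b) - f (a, b + t) + f (a, b) = t * (t * pd 1 (pd 2 f) (s2, y2))"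
proof -
  obtain y2 where y2: "b < y2" "y2 < b + t"
    and e1: "(\<lambda>y. f (a + t, y) - f (a, y)) (b + t) - (\<lambda>y. f (a + t, y) - f (a, y)) b
             = (b + t - b) * (pd 2 f (a + t, y2) - pd 2 f (a, y2))"
  proof (atomize_elim, rule MVT2)
    show "b < b + t" using t by simp
    fix y assume "b \<le> y" "y \<le> b + t"
    then have "(a + t, y) \<in> U" "(a, y) \<in> U" using sq t by simp_all
    then show "((\<lambda>y. f (a + t, y) - f (a, y)) has_real_derivative pd 2 f (a + t, y) - pd 2 f (a, y)) (at y)"
      using has_real_derivative_pd2[OF df] by (intro DERIV_diff) simp_all
  qed
  obtain s2 where s2: "a < s2" "s2 < a + t"
    and e2: "(\<lambda>s. pd 2 f (s, y2)) (a + t) - (\<lambda>s. pd 2 f (s, y2)) a = (a + t - a) * pd 1 (pd 2 f) (s2, y2)"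
  proof (atomize_elim, rule MVT2)
    show "a < a + t" using t by simp
    fix s assume "a \<le> s" "s \<le> a + t"
    then have "(s, y2) \<in> U" using sq y2 by simp
    then show "((\<lambda>s. pd 2 f (s, y2)) has_real_derivative pd 1 (pd 2 f) (s, y2)) (at s)"
      using has_real_derivative_pd1[OF d2] by simp
  qed
  show ?thesis using that[OF s2 y2] e1 e2 by (simp add: algebra_simps)
qed

lemma square_in_ball:
  assumes "a \<le> s" "s \<le> a + t" "b \<le> y" "y \<le> b + t" "3 * t = d" "d > 0"
  shows "(s, y) \<in> ball (a, b) d"
proof -
  have "dist (s, y) (a, b) \<le> dist s a + dist y b"
    unfolding dist_Pair_Pair by (rule sqrt_sum_squares_le_sum) simp_all
  also have "\<dots> \<le> t + t" using assms by (simp add: dist_real_def)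
  also have "\<dots> < d" using assms by simp
  finally show ?thesis by (simp add: dist_commute)
qed

text \<open>Otherwise, on a small
  enough square around \<open>p\<close> the two mixed derivatives stay more than \<open>|A - B|/2\<close> apart, yet the
  two mean value expressions of the same second difference equate values of them.\<close>
lemma pd_commute:
  assumes U: "open U" and p: "p \<in> U"
    and df: "\<And>q. q \<in> U \<Longrightarrow> f differentiable (at q)"
    and d1: "\<And>q. q \<in> U \<Longrightarrow> pd 1 f differentiable (at q)"
    and d2: "\<And>q. q \<in> U \<Longrightarrow> pd 2 f differentiable (at q)"
    and c1: "continuous_on U (pd 2 (pd 1 f))"
    and c2: "continuous_on U (pd 1 (pd 2 f))"
  shows "pd 1 (pd 2 f) p = pd 2 (pd 1 f) p"
proof (rule ccontr)
  obtain a b where pab: "p = (a, b)" by (cases p)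
  define A where "A = pd 2 (pd 1 f) p"
  define B where "B = pd 1 (pd 2 f) p"
  assume "pd 1 (pd 2 f) p \<noteq> pd 2 (pd 1 f) p"
  then have "A \<noteq> B" unfolding A_def B_def by simp
  define d where "d = \<bar>A - B\<bar> / 2"
  have d0: "d > 0" using \<open>A \<noteq> B\<close> unfolding d_def by simp
  obtain e where e: "e > 0" "ball p e \<subseteq> U" using U p openE by blast
  have ic1: "isCont (pd 2 (pd 1 f)) p" using c1 U p continuous_on_eq_continuous_at by blast
  have ic2: "isCont (pd 1 (pd 2 f)) p" using c2 U p continuous_on_eq_continuous_at by blast
  obtain r1 where r1: "r1 > 0" "\<And>q. dist q p < r1 \<Longrightarrow> dist (pd 2 (pd 1 f) q) A < d"
    using ic1 d0 unfolding continuous_at_eps_delta A_def by blast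
  obtain r2 where r2: "r2 > 0" "\<And>q. dist q p < r2 \<Longrightarrow> dist (pd 1 (pd 2 f) q) B < d"
    using ic2 d0 unfolding continuous_at_eps_delta B_def by blast
  define \<delta> where "\<delta> = min e (min r1 r2)"
  have \<delta>0: "\<delta> > 0" unfolding \<delta>_def using e r1 r2 by simp
  define t where "t = \<delta> / 3"
  have t0: "t > 0" unfolding t_def using \<delta>0 by simp
  have inU: "(s, y) \<in> U" and near1: "dist (s,y) p < r1" and near2: "dist (s,y) p < r2"
    if "a \<le> s" "s \<le> a + t" "b \<le> y" "y \<le> b + t" for s y
  proof -
    have "(s, y) \<in> ball (a, b) \<delta>" by (rule square_in_ball[OF that]) (use \<delta>0 t_def in simp_all)
    then have "dist (s,y) p < \<delta>" using pab by (simp add: dist_commute)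
    then show "(s, y) \<in> U" "dist (s,y) p < r1" "dist (s,y) p < r2"
      using e unfolding \<delta>_def by (auto simp: dist_commute)
  qed
  obtain s1 y1 where s1: "a < s1" "s1 < a + t" "b < y1" "y1 < b + t"
    and e1: "f (a + t, b + t) - f (a + t, b) - f (a, b + t) + f (a, b) = t * (t * pd 2 (pd 1 f) (s1, y1))"
    using second_difference_pd21[OF inU t0 df d1] by blast
  obtain s2 y2 where s2: "a < s2" "s2 < a + t" "b < y2" "y2 < b + t"
    and e2: "f (a + t, b + t) - f (a + t, b) - f (a, b + t) + f (a, b) = t * (t * pd 1 (pd 2 f) (s2, y2))"
    using second_difference_pd12[OF inU t0 df d2] by blast
  have eq: "pd 2 (pd 1 f) (s1, y1) = pd 1 (pd 2 f) (s2, y2)" using e1 e2 t0 by simp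
  have "dist (pd 2 (pd 1 f) (s1, y1)) A < d" using r1(2) near1 s1 by simp
  moreover have "dist (pd 1 (pd 2 f) (s2, y2)) B < d" using r2(2) near2 s2 by simp
  ultimately have "\<bar>A - B\<bar> < 2 * d" using eq by (simp add: dist_real_def)
  then show False unfolding d_def by simp
qed

lemma Ck_differentiable: "Ck_on (Suc k) S f \<Longrightarrow> p \<in> S \<Longrightarrow> f differentiable (at p)"
  by simp

lemma Ck_Suc_imp: "Ck_on (Suc k) S f \<Longrightarrow> Ck_on k S f"
proof (induction k arbitrary: f)
  case 0
  then have "\<forall>p\<in>S. f differentiable (at p)" by simp
  then have "\<forall>p\<in>S. isCont f p" using differentiable_imp_continuous_within by blast
  then show ?case by (simp add: continuous_at_imp_continuous_on)
next
  case (Suc k)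
  then show ?case by (metis Ck_on.simps(2))
qed

lemma Ck_pd: "Ck_on (Suc k) S f \<Longrightarrow> Ck_on k S (pd i f)"
proof -
  assume a: "Ck_on (Suc k) S f"
  have "pd i f = pd 1 f \<or> pd i f = pd 2 f" by (cases "i = 1") (simp_all add: pd_def fun_eq_iff)
  then show ?thesis using a by (metis Ck_on.simps(2))
qed

lemma Ck_cong:
  assumes "open S" "Ck_on k S f" "\<And>x. x \<in> S \<Longrightarrow> f x = g x"
  shows "Ck_on k S g"
  using assms(2,3)
proof (induction k arbitrary: f g)
  case 0
  then show ?case using continuous_on_cong[of S S f g] by simp
next
  case (Suc k)
  have "g differentiable (at p)" if p: "p \<in> S" for p
    using differentiable_cong_open[OF assms(1) p, of f g] Suc.prems Ck_differentiable[OF Suc.prems(1) p]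
    by blast
  moreover have "Ck_on k S (pd i g)" for i
  proof -
    have "\<And>x. x \<in> S \<Longrightarrow> pd i f x = pd i g x" using pd_cong_open[OF assms(1)] Suc.prems(2) by blast
    then show ?thesis using Suc.IH[of "pd i f" "pd i g"] Ck_pd[OF Suc.prems(1)] by blast
  qed
  ultimately show ?case by simp
qed

lemma Ck_const: "Ck_on k S (\<lambda>x. c)"
proof (induction k arbitrary: c)
  case 0 then show ?case by simp
next
  case (Suc k)
  have "pd i (\<lambda>x. c) = (\<lambda>x. 0)" for i by (rule ext) (simp add: pd_const)
  with Suc show ?case by simp
qed

lemma Ck_add:
  assumes "open S" shows "Ck_on k S f \<Longrightarrow> Ck_on k S g \<Longrightarrow> Ck_on k S (\<lambda>x. f x + g x)"
proof (induction k arbitrary: f g)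
  case 0 then show ?case by (simp add: continuous_on_add)
next
  case (Suc k)
  have d1: "\<forall>p\<in>S. f differentiable at p" and d2: "\<forall>p\<in>S. g differentiable at p"
    using Suc.prems by simp_all
  have "Ck_on k S (pd i (\<lambda>x. f x + g x))" for i
  proof -
    have Ck_rhs: "Ck_on k S (\<lambda>x. pd i f x + pd i g x)" using Suc.IH[OF Ck_pd[OF Suc.prems(1)] Ck_pd[OF Suc.prems(2)]] .
    have pd_rule: "\<And>x. x \<in> S \<Longrightarrow> pd i f x + pd i g x = pd i (\<lambda>x. f x + g x) x"
      using d1 d2 by (simp add: pd_add)
    show ?thesis by (rule Ck_cong[OF assms Ck_rhs pd_rule])
  qed
  moreover have "\<forall>p\<in>S. (\<lambda>x. f x + g x) differentiable (at p)"
    using d1 d2 by simp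
  ultimately show ?case by (simp only: Ck_on.simps)
qed

lemma Ck_mult:
  assumes "open S" shows "Ck_on k S f \<Longrightarrow> Ck_on k S g \<Longrightarrow> Ck_on k S (\<lambda>x. f x * g x)"
proof (induction k arbitrary: f g)
  case 0 then show ?case by (simp add: continuous_on_mult)
next
  case (Suc k)
  have d1: "\<forall>p\<in>S. f differentiable at p" and d2: "\<forall>p\<in>S. g differentiable at p"
    using Suc.prems by simp_all
  have "Ck_on k S (pd i (\<lambda>x. f x * g x))" for i
  proof -
    have Ck_rhs: "Ck_on k S (\<lambda>x. pd i f x * g x + f x * pd i g x)"
      using Ck_add[OF assms Suc.IH[OF Ck_pd[OF Suc.prems(1)] Ck_Suc_imp[OF Suc.prems(2)]]
                   Suc.IH[OF Ck_Suc_imp[OF Suc.prems(1)] Ck_pd[OF Suc.prems(2)]]] .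
    have pd_rule: "\<And>x. x \<in> S \<Longrightarrow> pd i f x * g x + f x * pd i g x = pd i (\<lambda>x. f x * g x) x"
      using d1 d2 by (simp add: pd_mult)
    show ?thesis by (rule Ck_cong[OF assms Ck_rhs pd_rule])
  qed
  moreover have "\<forall>p\<in>S. (\<lambda>x. f x * g x) differentiable (at p)"
    using d1 d2 by simp
  ultimately show ?case by (simp only: Ck_on.simps)
qed

lemma smooth1_deriv: "smooth1_on V \<phi> \<Longrightarrow> smooth1_on V (deriv \<phi>)"
  unfolding smooth1_on_def
proof (intro allI ballI)
  fix k x assume "\<forall>k. \<forall>x\<in>V. (deriv ^^ k) \<phi> differentiable at x" "x \<in> V"
  then have "(deriv ^^ Suc k) \<phi> differentiable at x" by blast
  then show "(deriv ^^ k) (deriv \<phi>) differentiable at x" by (simp add: funpow_Suc_right del: funpow.simps)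
qed

lemma smooth1_has_derivative: "smooth1_on V \<phi> \<Longrightarrow> x \<in> V \<Longrightarrow> (\<phi> has_real_derivative deriv \<phi> x) (at x)"
  unfolding smooth1_on_def by (metis DERIV_deriv_iff_real_differentiable funpow_0)

lemma Ck_compose_smooth1:
  assumes "open S"
  shows "smooth1_on V \<phi> \<Longrightarrow> Ck_on k S f \<Longrightarrow> (\<And>x. x \<in> S \<Longrightarrow> f x \<in> V) \<Longrightarrow> Ck_on k S (\<lambda>x. \<phi> (f x))"
proof (induction k arbitrary: \<phi>)
  case 0
  have "continuous_on V \<phi>"
    using 0 smooth1_has_derivative by (meson DERIV_isCont continuous_at_imp_continuous_on)
  moreover have "f ` S \<subseteq> V" using 0 by blast
  ultimately show ?case using 0 continuous_on_compose2[of V \<phi> S f] by simp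
next
  case (Suc k)
  have dg: "\<And>x. x \<in> S \<Longrightarrow> (\<lambda>x. \<phi> (f x)) differentiable (at x)"
  proof -
    fix x assume x: "x \<in> S"
    have "\<phi> differentiable (at (f x))" using smooth1_has_derivative[OF Suc.prems(1)] Suc.prems x
      real_differentiable_def by blast
    then show "(\<lambda>x. \<phi> (f x)) differentiable (at x)"
      using differentiable_compose[of \<phi> f] Suc.prems x by auto
  qed
  have "Ck_on k S (pd i (\<lambda>x. \<phi> (f x)))" for i
  proof -
    have Ck_rhs: "Ck_on k S (\<lambda>x. deriv \<phi> (f x) * pd i f x)"
      using Ck_mult[OF assms Suc.IH[OF smooth1_deriv[OF Suc.prems(1)] Ck_Suc_imp[OF Suc.prems(2)] Suc.prems(3)] Ck_pd[OF Suc.prems(2)]] .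
    moreover have pd_rule: "\<And>x. x \<in> S \<Longrightarrow> deriv \<phi> (f x) * pd i f x = pd i (\<lambda>x. \<phi> (f x)) x"
    proof -
      fix x assume x: "x \<in> S"
      show "deriv \<phi> (f x) * pd i f x = pd i (\<lambda>x. \<phi> (f x)) x"
        by (rule pd_chain_real[OF smooth1_has_derivative[OF Suc.prems(1) Suc.prems(3)[OF x]] Ck_differentiable[OF Suc.prems(2) x], symmetric])
    qed
    show ?thesis by (rule Ck_cong[OF assms Ck_rhs pd_rule])
  qed
  then show ?case using dg by (simp only: Ck_on.simps) blast
qed


section \<open>Smoothness of one-variable functions and the dual function \<open>\<psi>\<^sup>*\<close>\<close>

text \<open>Differentiability of the iterated derivatives up to order \<open>k\<close>; smoothness means this for
  every \<open>k\<close>, and the closure properties are proved by induction on \<open>k\<close>.\<close>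
definition diff_upto :: "nat \<Rightarrow> real set \<Rightarrow> (real \<Rightarrow> real) \<Rightarrow> bool" where
  "diff_upto k V f \<longleftrightarrow> (\<forall>j\<le>k. \<forall>x\<in>V. (deriv ^^ j) f differentiable (at x))"

lemma funpow_deriv: "(deriv ^^ j) (deriv f) = (deriv ^^ Suc j) f"
  by (simp only: funpow_Suc_right comp_def)

lemma diff_upto_Suc: "diff_upto (Suc k) V f \<longleftrightarrow> (\<forall>x\<in>V. f differentiable (at x)) \<and> diff_upto k V (deriv f)"
proof
  assume a: "diff_upto (Suc k) V f"
  have "(\<forall>x\<in>V. f differentiable (at x))" using a unfolding diff_upto_def
    using le0[of "Suc k"] funpow_0[of deriv f] by metis
  moreover have "diff_upto k V (deriv f)" unfolding diff_upto_def
  proof (intro allI impI ballI)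
    fix j x assume "j \<le> k" "x \<in> V"
    then have "Suc j \<le> Suc k" "x \<in> V" by simp_all
    then have "(deriv ^^ Suc j) f differentiable (at x)" using a unfolding diff_upto_def by blast
    then show "(deriv ^^ j) (deriv f) differentiable at x" by (simp only: funpow_deriv)
  qed
  ultimately show "(\<forall>x\<in>V. f differentiable (at x)) \<and> diff_upto k V (deriv f)" by blast
next
  assume a: "(\<forall>x\<in>V. f differentiable (at x)) \<and> diff_upto k V (deriv f)"
  show "diff_upto (Suc k) V f" unfolding diff_upto_def
  proof (intro allI impI ballI)
    fix j x assume j: "j \<le> Suc k" and x: "x \<in> V"
    show "(deriv ^^ j) f differentiable at x"
    proof (cases j)
      case 0 then show ?thesis using a x by simp
    next
      case (Suc j')
      then have "(deriv ^^ j') (deriv f) differentiable at x" using a j x unfolding diff_upto_def by simp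
      then show ?thesis using Suc by (simp only: funpow_deriv)
    qed
  qed
qed

lemma diff_upto_0: "diff_upto 0 V f \<longleftrightarrow> (\<forall>x\<in>V. f differentiable (at x))"
  unfolding diff_upto_def by simp

lemma smooth1_iff_diff_upto: "smooth1_on V f \<longleftrightarrow> (\<forall>k. diff_upto k V f)"
  unfolding smooth1_on_def diff_upto_def by blast

lemma deriv_cong_open:
  fixes f g :: "real \<Rightarrow> real"
  assumes "open V" "x \<in> V" "\<And>y. y \<in> V \<Longrightarrow> f y = g y"
  shows "deriv f x = deriv g x"
proof -
  have "eventually (\<lambda>y. f y = g y) (nhds x)"
    unfolding eventually_nhds using assms by blast
  then show ?thesis by (rule deriv_cong_ev) simp
qed

lemma diff_upto_cong:
  assumes "open V" shows "diff_upto k V f \<Longrightarrow> (\<And>x. x \<in> V \<Longrightarrow> f x = g x) \<Longrightarrow> diff_upto k V g"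
proof (induction k arbitrary: f g)
  case 0 then show ?case unfolding diff_upto_0 using differentiable_cong_open[OF assms] by blast
next
  case (Suc k)
  have "\<forall>x\<in>V. g differentiable (at x)" using Suc.prems unfolding diff_upto_Suc using differentiable_cong_open[OF assms] by blast
  moreover have "diff_upto k V (deriv g)"
    using Suc.IH[of "deriv f" "deriv g"] Suc.prems deriv_cong_open[OF assms] unfolding diff_upto_Suc by blast
  ultimately show ?case unfolding diff_upto_Suc by blast
qed

lemma diff_upto_deriv_eq: "(\<And>x. x \<in> V \<Longrightarrow> (f has_real_derivative f' x) (at x)) \<Longrightarrow> open V \<Longrightarrow> diff_upto k V f' \<Longrightarrow> diff_upto (Suc k) V f"
proof -
  assume d: "\<And>x. x \<in> V \<Longrightarrow> (f has_real_derivative f' x) (at x)" and V: "open V" and k: "diff_upto k V f'"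
  have "\<And>x. x \<in> V \<Longrightarrow> f' x = deriv f x"
  proof -
    fix x assume "x \<in> V" then show "f' x = deriv f x" using DERIV_imp_deriv[OF d] by simp
  qed
  then have "diff_upto k V (deriv f)" using diff_upto_cong[OF V k] by blast
  moreover have "\<forall>x\<in>V. f differentiable (at x)" using d real_differentiable_def by blast
  ultimately show ?thesis unfolding diff_upto_Suc by blast
qed

lemma diff_upto_mono: "diff_upto (Suc k) V f \<Longrightarrow> diff_upto k V f"
  unfolding diff_upto_def by simp

lemma diff_upto_const: "diff_upto k V (\<lambda>x. c)"
  unfolding diff_upto_def
proof (intro allI impI ballI)
  fix j x
  show "(deriv ^^ j) (\<lambda>x. c) differentiable at x"
  proof (cases j)
    case 0 then show ?thesis by simp
  next
    case (Suc j')
    have z: "(deriv ^^ j') (\<lambda>x. 0::real) = (\<lambda>x. 0)" by (induction j') auto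
    have "deriv (\<lambda>x. c) = (\<lambda>x. 0::real)" by (rule ext) simp
    then have "(deriv ^^ j) (\<lambda>x. c) = (\<lambda>x. 0)" using Suc z by (simp only: funpow_deriv[symmetric])
    then show ?thesis by simp
  qed
qed

lemma diff_upto_add: assumes "open V" shows "diff_upto k V f \<Longrightarrow> diff_upto k V g \<Longrightarrow> diff_upto k V (\<lambda>x. f x + g x)"
proof (induction k arbitrary: f g)
  case 0 then show ?case unfolding diff_upto_0 by simp
next
  case (Suc k)
  have fd: "\<And>x. x \<in> V \<Longrightarrow> (f has_real_derivative deriv f x) (at x)"
   and gd: "\<And>x. x \<in> V \<Longrightarrow> (g has_real_derivative deriv g x) (at x)"
    using Suc.prems unfolding diff_upto_Suc by (simp_all add: DERIV_deriv_iff_real_differentiable)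
  show ?case
  proof (rule diff_upto_deriv_eq[OF _ assms])
    show "\<And>x. x \<in> V \<Longrightarrow> ((\<lambda>x. f x + g x) has_real_derivative deriv f x + deriv g x) (at x)"
      using fd gd by (simp add: Deriv.field_differentiable_add)
    show "diff_upto k V (\<lambda>x. deriv f x + deriv g x)" using Suc.IH Suc.prems unfolding diff_upto_Suc by blast
  qed
qed

lemma diff_upto_mult: assumes "open V" shows "diff_upto k V f \<Longrightarrow> diff_upto k V g \<Longrightarrow> diff_upto k V (\<lambda>x. f x * g x)"
proof (induction k arbitrary: f g)
  case 0 then show ?case unfolding diff_upto_0 by simp
next
  case (Suc k)
  have fd: "\<And>x. x \<in> V \<Longrightarrow> (f has_real_derivative deriv f x) (at x)"
   and gd: "\<And>x. x \<in> V \<Longrightarrow> (g has_real_derivative deriv g x) (at x)"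
    using Suc.prems unfolding diff_upto_Suc by (simp_all add: DERIV_deriv_iff_real_differentiable)
  show ?case
  proof (rule diff_upto_deriv_eq[OF _ assms])
    show "\<And>x. x \<in> V \<Longrightarrow> ((\<lambda>x. f x * g x) has_real_derivative deriv f x * g x + f x * deriv g x) (at x)"
    proof -
      fix x assume x: "x \<in> V"
      show "((\<lambda>x. f x * g x) has_real_derivative deriv f x * g x + f x * deriv g x) (at x)"
        using DERIV_mult'[OF fd[OF x] gd[OF x]] by (simp add: add.commute)
    qed
    have a: "diff_upto k V (deriv f)" "diff_upto k V (deriv g)" "diff_upto k V f" "diff_upto k V g"
      using Suc.prems diff_upto_mono unfolding diff_upto_Suc by blast+
    show "diff_upto k V (\<lambda>x. deriv f x * g x + f x * deriv g x)"
      by (rule diff_upto_add[OF assms Suc.IH[OF a(1) a(4)] Suc.IH[OF a(3) a(2)]])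
  qed
qed

lemma diff_upto_comp: assumes "open W"
  shows "smooth1_on V \<phi> \<Longrightarrow> diff_upto k W f \<Longrightarrow> (\<And>x. x \<in> W \<Longrightarrow> f x \<in> V) \<Longrightarrow> diff_upto k W (\<lambda>x. \<phi> (f x))"
proof (induction k arbitrary: \<phi>)
  case 0
  show ?case unfolding diff_upto_0
  proof
    fix x assume x: "x \<in> W"
    have "\<phi> differentiable (at (f x))" using smooth1_has_derivative[OF 0(1) 0(3)[OF x]] real_differentiable_def by blast
    moreover have "f differentiable (at x)" using 0(2) x unfolding diff_upto_0 by blast
    ultimately show "(\<lambda>x. \<phi> (f x)) differentiable at x" using differentiable_compose by blast
  qed
next
  case (Suc k)
  have fd: "\<And>x. x \<in> W \<Longrightarrow> (f has_real_derivative deriv f x) (at x)"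
    using Suc.prems unfolding diff_upto_Suc by (simp_all add: DERIV_deriv_iff_real_differentiable)
  show ?case
  proof (rule diff_upto_deriv_eq[OF _ assms])
    show "\<And>x. x \<in> W \<Longrightarrow> ((\<lambda>x. \<phi> (f x)) has_real_derivative deriv \<phi> (f x) * deriv f x) (at x)"
    proof -
      fix x assume x: "x \<in> W"
      show "((\<lambda>x. \<phi> (f x)) has_real_derivative deriv \<phi> (f x) * deriv f x) (at x)"
        by (rule DERIV_chain2[OF smooth1_has_derivative[OF Suc.prems(1) Suc.prems(3)[OF x]] fd[OF x]])
    qed
    have a: "diff_upto k W (deriv f)" "diff_upto k W f"
      using Suc.prems diff_upto_mono unfolding diff_upto_Suc by blast+
    show "diff_upto k W (\<lambda>x. deriv \<phi> (f x) * deriv f x)"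
      by (rule diff_upto_mult[OF assms Suc.IH[OF smooth1_deriv[OF Suc.prems(1)] a(2) Suc.prems(3)] a(1)])
  qed
qed

lemma diff_upto_id: "diff_upto k V (\<lambda>x. x)"
  unfolding diff_upto_def
proof (intro allI impI ballI)
  fix j x
  show "(deriv ^^ j) (\<lambda>x. x) differentiable at (x::real)"
  proof (cases j)
    case 0 then show ?thesis by simp
  next
    case (Suc j')
    have "deriv (\<lambda>x. x::real) = (\<lambda>x. 1)" by (rule ext) simp
    moreover have "(deriv ^^ j') (\<lambda>x. 1::real) differentiable at x"
      using diff_upto_const[of j' UNIV 1] unfolding diff_upto_def by simp
    ultimately show ?thesis using Suc by (simp only: funpow_deriv[symmetric])
  qed
qed

lemma has_real_derivative_inverse: "x \<noteq> 0 \<Longrightarrow> (inverse has_real_derivative (-1) * inverse x * inverse x) (at (x::real))"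
  using DERIV_inverse[of x UNIV] by (simp add: power2_eq_square)

lemma diff_upto_inverse: "diff_upto k {0<..} (inverse :: real \<Rightarrow> real)"
proof (induction k)
  case 0
  have "\<forall>x\<in>{0<..}. (inverse::real\<Rightarrow>real) differentiable (at x)"
    using has_real_derivative_inverse real_differentiable_def by fastforce
  then show ?case unfolding diff_upto_0 .
next
  case (Suc k)
  have o: "open ({0<..}::real set)" by simp
  show ?case
  proof (rule diff_upto_deriv_eq[of _ _ "\<lambda>x. (-1) * inverse x * inverse x", OF _ o])
    show "\<And>x. x \<in> {0<..} \<Longrightarrow> (inverse has_real_derivative (-1) * inverse x * inverse x) (at x)"
      using has_real_derivative_inverse by simp
    show "diff_upto k {0<..} (\<lambda>x. (-1) * inverse x * inverse x)"
      by (rule diff_upto_mult[OF o diff_upto_mult[OF o diff_upto_const Suc.IH] Suc.IH])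
  qed
qed

lemma smooth1_inverse: "smooth1_on {0<..} (inverse :: real \<Rightarrow> real)"
  using diff_upto_inverse smooth1_iff_diff_upto by blast

lemma psi_star_smooth:
  assumes "smooth1_on {0<..} \<psi>" shows "smooth1_on {0<..} (psi_star \<psi>)"
proof -
  have "diff_upto k {0<..} (\<lambda>t. t * \<psi> (inverse t))" for k
  proof (rule diff_upto_mult[OF _ diff_upto_id diff_upto_comp[OF _ assms diff_upto_inverse]])
    show "open ({0<..}::real set)" by simp
    show "open ({0<..}::real set)" by simp
    show "\<And>x::real. x \<in> {0<..} \<Longrightarrow> inverse x \<in> {0<..}" by simp
  qed
  then show ?thesis unfolding smooth1_iff_diff_upto psi_star_def[abs_def] by blast
qed


text \<open>\<open>\<psi>\<^sup>*(t) = t \<psi>(1/t)\<close> is strictly convex: with \<open>r = (1-t)x + ty\<close> and \<open>b = ty/r\<close>, the point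
  \<open>1/r\<close> is the \<open>b\<close>-convex combination of \<open>1/x\<close> and \<open>1/y\<close> (perspective function argument).\<close>
lemma psi_star_convex:
  assumes "strict_convex_on {0<..} \<psi>" shows "strict_convex_on {0<..} (psi_star \<psi>)"
  unfolding strict_convex_on_def
proof (intro conjI ballI allI impI)
  show "convex ({0<..}::real set)" by (simp add: convex_real_interval)
  fix x y :: real and t :: real
  assume x: "x \<in> {0<..}" and y: "y \<in> {0<..}" and xy: "x \<noteq> y" and t0: "0 < t" and t1: "t < 1"
  define r where "r = (1 - t) * x + t * y"
  have xp: "x > 0" and yp: "y > 0" using x y by auto
  have rp: "r > 0" unfolding r_def using xp yp t0 t1 by (simp add: add_pos_pos)
  define b where "b = t * y / r"
  have b0: "0 < b" unfolding b_def using t0 yp rp by simp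
  have b1: "b < 1" unfolding b_def using t1 xp rp by (simp add: r_def field_simps)
  have ib: "1 - b = (1 - t) * x / r" unfolding b_def using rp by (simp add: r_def field_simps)
  have "(1 - b) * inverse x + b * inverse y = ((1 - t) * x / r) * inverse x + (t * y / r) * inverse y"
    by (subst ib) (simp add: b_def)
  also have "\<dots> = ((1 - t) + t) / r" using xp yp rp by (simp add: field_simps)
  also have "\<dots> = inverse r" by (simp add: divide_inverse)
  finally have ir: "inverse r = (1 - b) * inverse x + b * inverse y" by simp
  have ne: "inverse x \<noteq> inverse y" using xy by simp
  have "\<psi> ((1 - b) *\<^sub>R inverse x + b *\<^sub>R inverse y) < (1 - b) * \<psi> (inverse x) + b * \<psi> (inverse y)"
    using assms ne b0 b1 xp yp unfolding strict_convex_on_def by simp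
  then have "\<psi> (inverse r) < (1 - b) * \<psi> (inverse x) + b * \<psi> (inverse y)" using ir by simp
  then have "r * \<psi> (inverse r) < r * ((1 - b) * \<psi> (inverse x) + b * \<psi> (inverse y))"
    using rp by simp
  also have "\<dots> = (1 - t) * (x * \<psi> (inverse x)) + t * (y * \<psi> (inverse y))"
    using rp by (subst ib) (simp add: b_def field_simps)
  finally show "psi_star \<psi> ((1 - t) *\<^sub>R x + t *\<^sub>R y) < (1 - t) * psi_star \<psi> x + t * psi_star \<psi> y"
    unfolding psi_star_def r_def by simp
qed

lemma psi_star_deriv:
  assumes "smooth1_on {0<..} \<psi>" "t > 0"
  shows "deriv (psi_star \<psi>) t = \<psi> (inverse t) - deriv \<psi> (inverse t) * inverse t"
proof -
  have d: "(\<psi> has_real_derivative deriv \<psi> (inverse t)) (at (inverse t))"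
    using smooth1_has_derivative[OF assms(1)] assms(2) by simp
  have "((\<lambda>t. t * \<psi> (inverse t)) has_real_derivative
      t * (deriv \<psi> (inverse t) * ((-1) * inverse t * inverse t)) + 1 * \<psi> (inverse t)) (at t)"
    by (rule DERIV_mult'[OF DERIV_ident DERIV_chain2[OF d has_real_derivative_inverse]]) (use assms in simp)
  then have "(psi_star \<psi> has_real_derivative \<psi> (inverse t) - deriv \<psi> (inverse t) * inverse t) (at t)"
    unfolding psi_star_def[abs_def] using assms(2) by (simp add: field_simps)
  then show ?thesis by (rule DERIV_imp_deriv)
qed


lemma smooth2_Ck: "smooth2_on S f \<Longrightarrow> Ck_on k S f"
  unfolding smooth2_on_def by blast

lemma smooth2_pd: "smooth2_on S f \<Longrightarrow> smooth2_on S (pd i f)"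
  unfolding smooth2_on_def using Ck_pd by blast

lemma smooth2_diff: "smooth2_on S f \<Longrightarrow> p \<in> S \<Longrightarrow> f differentiable (at p)"
  using Ck_differentiable[OF smooth2_Ck[of S f "Suc 0"]] by blast

lemma smooth2_cont: "smooth2_on S f \<Longrightarrow> continuous_on S f"
  using smooth2_Ck[of S f 0] by simp

lemma smooth2_cong: "open S \<Longrightarrow> smooth2_on S f \<Longrightarrow> (\<And>x. x \<in> S \<Longrightarrow> f x = g x) \<Longrightarrow> smooth2_on S g"
  unfolding smooth2_on_def using Ck_cong by blast

lemma smooth2_add: "open S \<Longrightarrow> smooth2_on S f \<Longrightarrow> smooth2_on S g \<Longrightarrow> smooth2_on S (\<lambda>x. f x + g x)"
  unfolding smooth2_on_def using Ck_add by blast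

lemma smooth2_mult: "open S \<Longrightarrow> smooth2_on S f \<Longrightarrow> smooth2_on S g \<Longrightarrow> smooth2_on S (\<lambda>x. f x * g x)"
  unfolding smooth2_on_def using Ck_mult by blast

lemma smooth2_const: "smooth2_on S (\<lambda>x. c)"
  unfolding smooth2_on_def using Ck_const by blast

lemma smooth2_neg: "open S \<Longrightarrow> smooth2_on S f \<Longrightarrow> smooth2_on S (\<lambda>x. - f x)"
  using smooth2_mult[OF _ smooth2_const[of S "-1"], of f] by simp

lemma smooth2_sub: "open S \<Longrightarrow> smooth2_on S f \<Longrightarrow> smooth2_on S g \<Longrightarrow> smooth2_on S (\<lambda>x. f x - g x)"
  using smooth2_add[OF _ _ smooth2_neg, of S f g] by simp

lemma smooth2_comp1: "open S \<Longrightarrow> smooth1_on V \<phi> \<Longrightarrow> smooth2_on S f \<Longrightarrow> (\<And>x. x \<in> S \<Longrightarrow> f x \<in> V)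
   \<Longrightarrow> smooth2_on S (\<lambda>x. \<phi> (f x))"
  unfolding smooth2_on_def using Ck_compose_smooth1 by blast

lemma smooth2_inverse: "open S \<Longrightarrow> smooth2_on S f \<Longrightarrow> (\<And>x. x \<in> S \<Longrightarrow> f x > 0)
   \<Longrightarrow> smooth2_on S (\<lambda>x. inverse (f x))"
  using smooth2_comp1[OF _ smooth1_inverse] by simp

lemma smooth2_pd_commute:
  assumes "open S" "smooth2_on S f" "p \<in> S"
  shows "pd 1 (pd 2 f) p = pd 2 (pd 1 f) p"
proof (rule pd_commute[OF assms(1,3)])
  show "\<And>q. q \<in> S \<Longrightarrow> f differentiable at q" using smooth2_diff[OF assms(2)] .
  show "\<And>q. q \<in> S \<Longrightarrow> pd 1 f differentiable at q" using smooth2_diff[OF smooth2_pd[OF assms(2)]] .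
  show "\<And>q. q \<in> S \<Longrightarrow> pd 2 f differentiable at q" using smooth2_diff[OF smooth2_pd[OF assms(2)]] .
  show "continuous_on S (pd 2 (pd 1 f))" using smooth2_cont[OF smooth2_pd[OF smooth2_pd[OF assms(2)]]] .
  show "continuous_on S (pd 1 (pd 2 f))" using smooth2_cont[OF smooth2_pd[OF smooth2_pd[OF assms(2)]]] .
qed

lemma smooth2_pd_sym:
  assumes "open S" "smooth2_on S f" "p \<in> S"
  shows "pd i (pd j f) p = pd j (pd i f) p"
proof -
  have "pd i f = pd 1 f \<or> pd i f = pd 2 f" "pd j f = pd 1 f \<or> pd j f = pd 2 f"
    by (cases "i = 1"; simp add: pd_def fun_eq_iff)+
  moreover have "pd i g = pd 1 g \<or> pd i g = pd 2 g" "pd j g = pd 1 g \<or> pd j g = pd 2 g" for g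
    by (cases "i = 1"; simp add: pd_def fun_eq_iff)+
  ultimately show ?thesis using smooth2_pd_commute[OF assms]
    by (cases "i = 1"; cases "j = 1"; simp add: pd_def fun_eq_iff) 
qed


section \<open>The Hessian, its cofactors and its inverse\<close>

text \<open>Indices of partial derivatives are kept as the numeral \<open>1\<close> rather than \<open>Suc 0\<close>, so that
  they match the case distinction in the definition of \<open>pd\<close>.\<close>
declare One_nat_def [simp del]

lemma smooth2_hess: "smooth2_on S u \<Longrightarrow> smooth2_on S (hess u i j)"
  unfolding hess_def[abs_def] by (intro smooth2_pd)

lemma smooth2_hessdet: "open S \<Longrightarrow> smooth2_on S u \<Longrightarrow> smooth2_on S (hessdet u)"
  unfolding hessdet_def[abs_def] by (intro smooth2_sub smooth2_mult smooth2_hess)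

lemma hess_sym:
  assumes "open S" "smooth2_on S u" "x \<in> S"
  shows "hess u i j x = hess u j i x"
  unfolding hess_def using smooth2_pd_sym[OF assms] .

lemma pd_hess_sym:
  assumes S: "open S" and u: "smooth2_on S u" and x: "x \<in> S"
  shows pd_hess21: "pd l (hess u 2 1) x = pd l (hess u 1 2) x"
    and pd2_hess11: "pd 2 (hess u 1 1) x = pd 1 (hess u 1 2) x"
    and pd1_hess22: "pd 1 (hess u 2 2) x = pd 2 (hess u 1 2) x"
proof -
  have h21: "pd m (hess u 2 1) x = pd m (hess u 1 2) x" for m
    by (rule pd_cong_open[OF S x]) (use hess_sym[OF S u] in blast)
  then show "pd l (hess u 2 1) x = pd l (hess u 1 2) x" .
  have "pd 2 (hess u 1 1) x = pd 1 (pd 2 (pd 1 u)) x"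
    unfolding hess_def[abs_def] by (rule smooth2_pd_sym[OF S smooth2_pd[OF u] x])
  then show "pd 2 (hess u 1 1) x = pd 1 (hess u 1 2) x"
    using h21[of 1] unfolding hess_def[abs_def] by simp
  show "pd 1 (hess u 2 2) x = pd 2 (hess u 1 2) x"
    unfolding hess_def[abs_def] by (rule smooth2_pd_sym[OF S smooth2_pd[OF u] x])
qed

definition hesscof :: "(real \<times> real \<Rightarrow> real) \<Rightarrow> nat \<Rightarrow> nat \<Rightarrow> real \<times> real \<Rightarrow> real" where
  "hesscof u l i = (if l = 1 \<and> i = 1 then hess u 2 2 else if l = 2 \<and> i = 2 then hess u 1 1
     else (\<lambda>p. - hess u l i p))"

lemma hesscof_simps: "hesscof u 1 1 = hess u 2 2" "hesscof u 2 2 = hess u 1 1"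
   "hesscof u 1 2 = (\<lambda>p. - hess u 1 2 p)" "hesscof u 2 1 = (\<lambda>p. - hess u 2 1 p)"
  unfolding hesscof_def by simp_all

lemma hessinv_hesscof: "hessinv u l i p = hesscof u l i p * inverse (hessdet u p)"
  unfolding hessinv_def hesscof_def by (simp add: divide_inverse)

lemma hessinv_hess:
  assumes "hessdet u x \<noteq> 0" "l = 1 \<or> l = 2" "i = 1 \<or> i = 2"
  shows "(\<Sum>j\<in>{1,2}. hessinv u l j x * hess u j i x) = (if l = i then 1 else 0)"
proof -
  have "(\<Sum>j\<in>{1,2}. hesscof u l j x * hess u j i x) = (if l = i then hessdet u x else 0)"
    using assms(2,3) by (auto simp: hesscof_def hessdet_def algebra_simps)
  moreover have "(\<Sum>j\<in>{1,2}. hessinv u l j x * hess u j i x)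
      = inverse (hessdet u x) * (\<Sum>j\<in>{1,2}. hesscof u l j x * hess u j i x)"
    by (simp add: hessinv_hesscof algebra_simps)
  ultimately show ?thesis using assms(1) by simp
qed

lemma smooth2_hesscof: "open S \<Longrightarrow> smooth2_on S u \<Longrightarrow> smooth2_on S (hesscof u l i)"
  unfolding hesscof_def using smooth2_hess smooth2_neg[OF _ smooth2_hess] by simp

lemma smooth2_hessinv:
  assumes "open S" "smooth2_on S u" "\<forall>p\<in>S. hessdet u p > 0"
  shows "smooth2_on S (hessinv u l i)"
proof -
  have "smooth2_on S (\<lambda>p. inverse (hessdet u p))"
    using smooth2_inverse[OF assms(1) smooth2_hessdet[OF assms(1,2)]] assms(3) by blast
  then show ?thesis
    unfolding hessinv_hesscof[abs_def] by (intro smooth2_mult smooth2_hesscof assms(1,2))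
qed

text \<open>The cofactor matrix of a Hessian is divergence free, row- and columnwise (Piola
  identity); this is what turns the fourth-order operator into a nondivergence form.\<close>
lemma hesscof_div_free:
  assumes S: "open S" and u: "smooth2_on S u" and x: "x \<in> S" and i: "i = 1 \<or> i = 2"
  shows hesscof_div_row: "pd 1 (hesscof u i 1) x + pd 2 (hesscof u i 2) x = 0"
    and hesscof_div_col: "pd 1 (hesscof u 1 i) x + pd 2 (hesscof u 2 i) x = 0"
proof -
  have neg: "pd l (\<lambda>p. - hess u k m p) x = - pd l (hess u k m) x" for l k m
    by (rule pd_neg[OF smooth2_diff[OF smooth2_hess[OF u] x]])
  show "pd 1 (hesscof u i 1) x + pd 2 (hesscof u i 2) x = 0"
       "pd 1 (hesscof u 1 i) x + pd 2 (hesscof u 2 i) x = 0"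
    using i by (auto simp: hesscof_simps neg pd_hess_sym[OF S u x])
qed

section \<open>Local inversion of the gradient map\<close>

lemma grad_has_derivative:
  assumes "smooth2_on S u" "x \<in> S"
  shows "(grad u has_derivative (\<lambda>h. (hess u 1 1 x * fst h + hess u 2 1 x * snd h,
            hess u 1 2 x * fst h + hess u 2 2 x * snd h))) (at x)"
proof -
  have g: "grad u = (\<lambda>x. (pd 1 u x, pd 2 u x))" by (rule ext) (simp add: grad_def)
  have d1: "pd 1 u differentiable (at x)" and d2: "pd 2 u differentiable (at x)"
    using smooth2_diff[OF smooth2_pd[OF assms(1)] assms(2)] by blast+
  show ?thesis unfolding g hess_def
    by (rule has_derivative_Pair[OF has_derivative_pd[OF d1] has_derivative_pd[OF d2]])
qed

lemma invertible_blinfun_2x2: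
  fixes a b c d :: real
  assumes D: "a * d - b * c \<noteq> 0"
  shows "\<exists>N. N o\<^sub>L Blinfun (\<lambda>h. (a * fst h + c * snd h, b * fst h + d * snd h)) = id_blinfun"
proof -
  define L where "L = (\<lambda>h::real \<times> real. (a * fst h + c * snd h, b * fst h + d * snd h))"
  define Li where "Li = (\<lambda>k::real \<times> real. (inverse (a * d - b * c) * (d * fst k - c * snd k),
                                           inverse (a * d - b * c) * (a * snd k - b * fst k)))"
  have bl: "bounded_linear L" "bounded_linear Li"
    unfolding L_def Li_def by (intro bounded_linear_intros)+
  have "Li (L h) = h" for h
    using D unfolding L_def Li_def by (cases h) (simp add: field_simps)
  then have "Blinfun Li o\<^sub>L Blinfun L = id_blinfun"
    by (intro blinfun_eqI) (simp add: bounded_linear_Blinfun_apply[OF bl(1)] bounded_linear_Blinfun_apply[OF bl(2)])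
  then show ?thesis unfolding L_def by blast
qed

lemma grad_local_inverse:
  assumes U: "open \<Omega>" and us: "smooth2_on \<Omega> u" and J: "\<forall>p\<in>\<Omega>. hessdet u p \<noteq> 0" and x0: "x0 \<in> \<Omega>"
  obtains V g where "open V" "grad u x0 \<in> V" "\<And>y. y \<in> V \<Longrightarrow> g y \<in> \<Omega>" "g (grad u x0) = x0"
    "\<And>y. y \<in> V \<Longrightarrow> grad u (g y) = y" "\<And>y. y \<in> V \<Longrightarrow> g differentiable (at y)"
proof -
  define L where "L x = (\<lambda>h::real\<times>real. (hess u 1 1 x * fst h + hess u 2 1 x * snd h,
            hess u 1 2 x * fst h + hess u 2 2 x * snd h))" for x
  define M where "M x = Blinfun (L x)" for x
  have bl: "bounded_linear (L x)" for x
    unfolding L_def by (intro bounded_linear_intros)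
  have MA: "blinfun_apply (M x) = L x" for x unfolding M_def using bl by (simp add: bounded_linear_Blinfun_apply)
  have der: "\<And>x. x \<in> \<Omega> \<Longrightarrow> (grad u has_derivative blinfun_apply (M x)) (at x)"
    unfolding MA L_def using grad_has_derivative[OF us] by blast
  have ch: "continuous_on \<Omega> (hess u i j)" for i j using smooth2_cont[OF smooth2_hess[OF us]] .
  have cont: "continuous_on \<Omega> M"
  proof (rule continuous_on_blinfun_componentwise)
    fix i :: "real \<times> real" assume "i \<in> Basis"
    show "continuous_on \<Omega> (\<lambda>x. blinfun_apply (M x) i)"
      unfolding MA L_def by (intro continuous_intros ch)
  qed
  have "hess u 1 1 x0 * hess u 2 2 x0 - hess u 1 2 x0 * hess u 2 1 x0 \<noteq> 0"
    using J x0 unfolding hessdet_def by auto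
  then obtain N where inv: "N o\<^sub>L M x0 = id_blinfun"
    using invertible_blinfun_2x2 unfolding M_def L_def by blast
  show ?thesis
  proof (rule inverse_function_theorem[OF U der cont x0 inv])
    fix U' V g g'
    assume UV: "open U'" "U' \<subseteq> \<Omega>" "x0 \<in> U'" "open V" "grad u x0 \<in> V"
      "homeomorphism U' V (grad u) g"
      and gd: "\<And>y. y \<in> V \<Longrightarrow> (g has_derivative (g' y)) (at y)"
    show ?thesis
    proof (rule that[of V g])
      show "open V" "grad u x0 \<in> V" by (fact UV)+
      show "\<And>y. y \<in> V \<Longrightarrow> g y \<in> \<Omega>" using UV unfolding homeomorphism_def by blast
      show "g (grad u x0) = x0" using UV unfolding homeomorphism_def by blast
      show "\<And>y. y \<in> V \<Longrightarrow> grad u (g y) = y" using UV unfolding homeomorphism_def by blast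
      show "\<And>y. y \<in> V \<Longrightarrow> g differentiable (at y)" using gd differentiable_def by blast
    qed
  qed
qed

lemma cramer2:
  fixes a b c d X Y r s :: real
  assumes "a * d - b * c \<noteq> 0" "a * X + b * Y = r" "c * X + d * Y = s"
  shows "X = (d * r - b * s) / (a * d - b * c)" "Y = (a * s - c * r) / (a * d - b * c)"
proof -
  have "(a * d - b * c) * X = d * (a * X + b * Y) - b * (c * X + d * Y)"
       "(a * d - b * c) * Y = a * (c * X + d * Y) - c * (a * X + b * Y)"
    by (simp_all add: algebra_simps)
  then have "(a * d - b * c) * X = d * r - b * s" "(a * d - b * c) * Y = a * s - c * r"
    using assms(2,3) by simp_all
  then show "X = (d * r - b * s) / (a * d - b * c)" "Y = (a * s - c * r) / (a * d - b * c)"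
    using assms(1) by (simp_all add: field_simps)
qed

section \<open>Derivatives of the Legendre transform\<close>

locale legendre_chart =
  fixes \<Omega> :: "(real \<times> real) set" and u ustar :: "real \<times> real \<Rightarrow> real"
    and V :: "(real \<times> real) set" and g :: "real \<times> real \<Rightarrow> real \<times> real"
  assumes \<Omega>_open: "open \<Omega>" and u_smooth: "smooth2_on \<Omega> u"
    and hessdet_pos: "\<forall>p\<in>\<Omega>. hessdet u p > 0"
    and legendre: "is_legendre_transform \<Omega> u ustar"
    and V_open: "open V" and g_in_\<Omega>: "\<And>y. y \<in> V \<Longrightarrow> g y \<in> \<Omega>"
    and grad_g: "\<And>y. y \<in> V \<Longrightarrow> grad u (g y) = y"
    and g_differentiable: "\<And>y. y \<in> V \<Longrightarrow> g differentiable (at y)"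
begin

definition "g1 y = fst (g y)"
definition "g2 y = snd (g y)"

lemma g_components: "(g1 y, g2 y) = g y" by (simp add: g1_def g2_def)

lemma g1_differentiable: "y \<in> V \<Longrightarrow> g1 differentiable (at y)"
  unfolding g1_def[abs_def]
  by (rule differentiable_compose[of fst g y UNIV])
     (simp_all add: g_differentiable bounded_linear_fst bounded_linear_imp_differentiable)

lemma g2_differentiable: "y \<in> V \<Longrightarrow> g2 differentiable (at y)"
  unfolding g2_def[abs_def]
  by (rule differentiable_compose[of snd g y UNIV])
     (simp_all add: g_differentiable bounded_linear_snd bounded_linear_imp_differentiable)

lemma g_in_domain: "y \<in> V \<Longrightarrow> (g1 y, g2 y) \<in> \<Omega>" using g_in_\<Omega>[of y] by (simp only: g_components)

lemma grad_u_at_g: "y \<in> V \<Longrightarrow> pd 1 u (g1 y, g2 y) = fst y \<and> pd 2 u (g1 y, g2 y) = snd y"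
  using grad_g[of y] unfolding grad_def g_components by (cases y) simp

lemma hessdet_at_g: "y \<in> V \<Longrightarrow> hessdet u (g y) > 0" using hessdet_pos g_in_\<Omega> by blast

text \<open>Differentiating \<open>\<nabla>u(g(\<xi>)) = \<xi>\<close>: the Jacobian of the inverse map \<open>g\<close> is the inverse Hessian,
  \<open>\<partial>g\<^sub>l/\<partial>\<xi>\<^sub>i = u\<^sup>l\<^sup>i\<close>.\<close>
lemma pd_g:
  assumes y: "y \<in> V" and i: "i = 1 \<or> i = 2"
  shows "pd i g1 y = hessinv u 1 i (g y) \<and> pd i g2 y = hessinv u 2 i (g y)"
proof -
  have row: "hess u 1 k (g y) * pd i g1 y + hess u 2 k (g y) * pd i g2 y = pd i (if k = 1 then fst else snd) y"
    if k: "k = 1 \<or> k = 2" for k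
  proof -
    have "pd i (\<lambda>\<eta>. pd k u (g1 \<eta>, g2 \<eta>)) y = pd i (if k = 1 then fst else snd) y"
      by (rule pd_cong_open[OF V_open y]) (use k grad_u_at_g in auto)
    moreover have "pd i (\<lambda>\<eta>. pd k u (g1 \<eta>, g2 \<eta>)) y =
        pd 1 (pd k u) (g1 y, g2 y) * pd i g1 y + pd 2 (pd k u) (g1 y, g2 y) * pd i g2 y"
      by (rule pd_chain_pair[OF g1_differentiable[OF y] g2_differentiable[OF y]
            smooth2_diff[OF smooth2_pd[OF u_smooth] g_in_domain[OF y]]])
    ultimately show ?thesis unfolding hess_def g_components by simp
  qed
  have e1: "hess u 1 1 (g y) * pd i g1 y + hess u 2 1 (g y) * pd i g2 y = (if i = 1 then 1 else 0)"
    using row[of 1] by (simp add: pd_fst)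
  have e2: "hess u 1 2 (g y) * pd i g1 y + hess u 2 2 (g y) * pd i g2 y = (if i = 1 then 0 else 1)"
    using row[of 2] by (simp add: pd_snd)
  have sym: "hess u 2 1 (g y) = hess u 1 2 (g y)"
    by (rule hess_sym[OF \<Omega>_open u_smooth g_in_\<Omega>[OF y]])
  have J: "hess u 1 1 (g y) * hess u 2 2 (g y) - hess u 2 1 (g y) * hess u 1 2 (g y) \<noteq> 0"
    using hessdet_at_g[OF y] sym unfolding hessdet_def by simp
  show ?thesis
    using cramer2[OF J e1 e2] sym i unfolding hessinv_def hessdet_def by auto
qed

lemma legendre_at:
  assumes y: "y \<in> V"
  shows "ustar y = g1 y * fst y + g2 y * snd y - u (g1 y, g2 y)"
proof -
  have "ustar (grad u (g y)) = fst (g y) * fst (grad u (g y)) + snd (g y) * snd (grad u (g y)) - u (g y)"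
    using legendre g_in_\<Omega>[OF y] unfolding is_legendre_transform_def by blast
  then show ?thesis using grad_g[OF y] by (simp add: g1_def g2_def)
qed

lemma pd_legendre:
  assumes y: "y \<in> V"
  shows "pd i ustar y = (if i = 1 then g1 y else g2 y)"
proof -
  have "pd i ustar y = pd i (\<lambda>y. (g1 y * fst y + g2 y * snd y) - u (g1 y, g2 y)) y"
    by (rule pd_cong_open[OF V_open y]) (simp add: legendre_at)
  also have "\<dots> = (pd i g1 y * fst y + g1 y * pd i fst y + (pd i g2 y * snd y + g2 y * pd i snd y))
       - (pd 1 u (g1 y, g2 y) * pd i g1 y + pd 2 u (g1 y, g2 y) * pd i g2 y)"
  proof -
    have df: "fst differentiable (at y)" "snd differentiable (at y)"
      by (simp_all add: bounded_linear_fst bounded_linear_snd bounded_linear_imp_differentiable)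
    have du: "u differentiable (at (g1 y, g2 y))" using smooth2_diff[OF u_smooth g_in_domain[OF y]] .
    have d1: "(\<lambda>y. g1 y * fst y) differentiable (at y)" "(\<lambda>y. g2 y * snd y) differentiable (at y)"
      using g1_differentiable[OF y] g2_differentiable[OF y] df by simp_all
    have d2: "(\<lambda>y. g1 y * fst y + g2 y * snd y) differentiable (at y)" using d1 by simp
    have d3: "(\<lambda>y. u (g1 y, g2 y)) differentiable (at y)"
    proof -
      have "(\<lambda>y. (g1 y, g2 y)) differentiable (at y)" using g1_differentiable[OF y] g2_differentiable[OF y] by (simp add: differentiable_Pair)
      then show ?thesis using differentiable_compose[of u "\<lambda>y. (g1 y, g2 y)"] du by simp
    qed
    show ?thesis
      using pd_diff[OF d2 d3, of i] pd_add[OF d1, of i] pd_mult[OF g1_differentiable[OF y] df(1), of i]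
        pd_mult[OF g2_differentiable[OF y] df(2), of i] pd_chain_pair[OF g1_differentiable[OF y] g2_differentiable[OF y] du, of i] by simp
  qed
  also have "\<dots> = (if i = 1 then g1 y else g2 y)"
    using grad_u_at_g[OF y] by (simp add: pd_fst pd_snd algebra_simps)
  finally show ?thesis .
qed

lemma hess_legendre:
  assumes y: "y \<in> V" and ij: "i = 1 \<or> i = 2" "j = 1 \<or> j = 2"
  shows "hess ustar i j y = hessinv u j i (g y)"
proof -
  have "hess ustar i j y = pd i (if j = 1 then g1 else g2) y"
    unfolding hess_def by (rule pd_cong_open[OF V_open y]) (simp add: pd_legendre)
  also have "\<dots> = hessinv u j i (g y)" using pd_g[OF y ij(1)] ij(2) by auto
  finally show ?thesis .
qed


lemma hessdet_legendre:
  assumes y: "y \<in> V"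
  shows "hessdet ustar y = inverse (hessdet u (g y))"
proof -
  define J where "J = hessdet u (g y)"
  have J0: "J \<noteq> 0" using hessdet_at_g[OF y] unfolding J_def by simp
  have hJ: "hess u 2 2 (g y) * hess u 1 1 (g y) - hess u 2 1 (g y) * hess u 1 2 (g y) = J"
    unfolding J_def hessdet_def by simp
  have "hessdet ustar y = hessinv u 1 1 (g y) * hessinv u 2 2 (g y) - hessinv u 2 1 (g y) * hessinv u 1 2 (g y)"
    unfolding hessdet_def using hess_legendre[OF y] by simp
  also have "\<dots> = (hess u 2 2 (g y) * hess u 1 1 (g y) - hess u 2 1 (g y) * hess u 1 2 (g y)) / (J * J)"
    unfolding hessinv_def J_def[symmetric] using J0 by (simp add: field_simps)
  also have "\<dots> = inverse J" unfolding hJ using J0 by (simp add: field_simps)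
  finally show ?thesis unfolding J_def .
qed

lemma hessinv_legendre:
  assumes y: "y \<in> V" and ij: "i = 1 \<or> i = 2" "j = 1 \<or> j = 2"
  shows "hessinv ustar i j y = hess u j i (g y)"
proof -
  have J: "hessdet u (g y) \<noteq> 0" using hessdet_at_g[OF y] by simp
  show ?thesis using ij
    unfolding hessinv_def[of ustar] hessdet_legendre[OF y] using hess_legendre[OF y] J
    by (auto simp: hessinv_def field_simps)
qed

end

lemma (in legendre_chart) pd_compose_g:
  assumes F: "smooth2_on \<Omega> F" and y: "y \<in> V" and i: "i = 1 \<or> i = 2"
  shows "pd i (\<lambda>q. F (g q)) y = pd 1 F (g y) * hessinv u 1 i (g y) + pd 2 F (g y) * hessinv u 2 i (g y)"
proof -
  have "pd i (\<lambda>q. F (g q)) y = pd i (\<lambda>q. F (g1 q, g2 q)) y" by (simp add: g_components)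
  also have "\<dots> = pd 1 F (g1 y, g2 y) * pd i g1 y + pd 2 F (g1 y, g2 y) * pd i g2 y"
    by (rule pd_chain_pair[OF g1_differentiable[OF y] g2_differentiable[OF y]
          smooth2_diff[OF F g_in_domain[OF y]]])
  finally show ?thesis using pd_g[OF y i] by (simp add: g_components)
qed

section \<open>The operator of equation (2) under Legendre duality\<close>

text \<open>The coefficient \<open>J\<^sup>*\<psi>\<^sup>*'(J\<^sup>*)(u\<^sup>*)\<^sup>i\<^sup>j\<close> of the dual equation, written in the \<open>x\<close> variables:
  \<open>(\<psi>(J)/J - \<psi>'(J)) u\<^sub>j\<^sub>i\<close>.\<close>
definition dual_coeff :: "(real \<Rightarrow> real) \<Rightarrow> (real \<times> real \<Rightarrow> real) \<Rightarrow> nat \<Rightarrow> nat \<Rightarrow> real \<times> real \<Rightarrow> real" where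
  "dual_coeff \<psi> u i j x = (\<psi> (hessdet u x) * inverse (hessdet u x) - deriv \<psi> (hessdet u x)) * hess u j i x"

text \<open>Its derivative \<open>\<partial>/\<partial>\<xi>\<^sub>j\<close>, written in the \<open>x\<close> variables.\<close>
definition dual_coeff_dxi :: "(real \<Rightarrow> real) \<Rightarrow> (real \<times> real \<Rightarrow> real) \<Rightarrow> nat \<Rightarrow> nat \<Rightarrow> real \<times> real \<Rightarrow> real" where
  "dual_coeff_dxi \<psi> u i j x =
     pd 1 (dual_coeff \<psi> u i j) x * hessinv u 1 j x + pd 2 (dual_coeff \<psi> u i j) x * hessinv u 2 j x"

text \<open>The left-hand side of the dual equation, written in the \<open>x\<close> variables.\<close>
definition dual_operator :: "(real \<Rightarrow> real) \<Rightarrow> (real \<times> real \<Rightarrow> real) \<Rightarrow> real \<times> real \<Rightarrow> real" where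
  "dual_operator \<psi> u x = (\<Sum>i\<in>{1,2}. \<Sum>j\<in>{1,2}.
     pd 1 (dual_coeff_dxi \<psi> u i j) x * hessinv u 1 i x + pd 2 (dual_coeff_dxi \<psi> u i j) x * hessinv u 2 i x)"

lemma smooth2_dual_coeff:
  assumes S: "open S" and u: "smooth2_on S u" and J: "\<forall>p\<in>S. hessdet u p > 0"
    and \<psi>: "smooth1_on {0<..} \<psi>"
  shows "smooth2_on S (dual_coeff \<psi> u i j)"
proof -
  have J_smooth: "smooth2_on S (hessdet u)" by (rule smooth2_hessdet[OF S u])
  have J_in: "\<And>x. x \<in> S \<Longrightarrow> hessdet u x \<in> {0<..}" using J by simp
  have "smooth2_on S (\<lambda>x. \<psi> (hessdet u x))" by (rule smooth2_comp1[OF S \<psi> J_smooth J_in])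
  moreover have "smooth2_on S (\<lambda>x. deriv \<psi> (hessdet u x))"
    by (rule smooth2_comp1[OF S smooth1_deriv[OF \<psi>] J_smooth J_in])
  moreover have "smooth2_on S (\<lambda>x. inverse (hessdet u x))" using smooth2_inverse[OF S J_smooth] J by blast
  ultimately show ?thesis
    unfolding dual_coeff_def[abs_def] by (intro smooth2_mult smooth2_sub smooth2_hess S u)
qed

lemma smooth2_dual_coeff_dxi:
  assumes "open S" "smooth2_on S u" "\<forall>p\<in>S. hessdet u p > 0" "smooth1_on {0<..} \<psi>"
  shows "smooth2_on S (dual_coeff_dxi \<psi> u i j)"
  unfolding dual_coeff_dxi_def[abs_def]
  by (intro smooth2_add smooth2_mult smooth2_pd smooth2_dual_coeff[OF assms] smooth2_hessinv assms(1-3))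

context legendre_chart
begin

text \<open>Since \<open>J\<^sup>* = 1/J\<close> and \<open>\<psi>\<^sup>*'(1/J) = \<psi>(J) - J\<psi>'(J)\<close>, the coefficient of the dual equation is
  \<open>dual_coeff\<close> evaluated at \<open>g(\<xi>)\<close>.\<close>
lemma eq2_coeff_legendre:
  assumes y: "y \<in> V" and ij: "i = 1 \<or> i = 2" "j = 1 \<or> j = 2" and \<psi>: "smooth1_on {0<..} \<psi>"
  shows "hessdet ustar y * deriv (psi_star \<psi>) (hessdet ustar y) * hessinv ustar i j y
       = dual_coeff \<psi> u i j (g y)"
proof -
  have J: "hessdet u (g y) > 0" using hessdet_at_g[OF y] .
  have e: "deriv (psi_star \<psi>) (inverse (hessdet u (g y))) =
     \<psi> (hessdet u (g y)) - deriv \<psi> (hessdet u (g y)) * hessdet u (g y)"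
    using psi_star_deriv[OF \<psi>, of "inverse (hessdet u (g y))"] J by simp
  show ?thesis unfolding hessdet_legendre[OF y] hessinv_legendre[OF y ij] dual_coeff_def e
    using J by (simp add: field_simps)
qed

lemma eq2_lhs_legendre:
  assumes y0: "y0 \<in> V" and \<psi>: "smooth1_on {0<..} \<psi>"
  shows "eq2_lhs (psi_star \<psi>) ustar y0 = dual_operator \<psi> u (g y0)"
proof -
  have "pd i (pd j (\<lambda>q. hessdet ustar q * deriv (psi_star \<psi>) (hessdet ustar q) * hessinv ustar i j q)) y0
     = pd 1 (dual_coeff_dxi \<psi> u i j) (g y0) * hessinv u 1 i (g y0)
       + pd 2 (dual_coeff_dxi \<psi> u i j) (g y0) * hessinv u 2 i (g y0)"
    if ij: "i = 1 \<or> i = 2" "j = 1 \<or> j = 2" for i j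
  proof -
    have inner: "pd j (\<lambda>q. hessdet ustar q * deriv (psi_star \<psi>) (hessdet ustar q) * hessinv ustar i j q) \<eta>
       = dual_coeff_dxi \<psi> u i j (g \<eta>)" if \<eta>: "\<eta> \<in> V" for \<eta>
    proof -
      have "pd j (\<lambda>q. hessdet ustar q * deriv (psi_star \<psi>) (hessdet ustar q) * hessinv ustar i j q) \<eta>
         = pd j (\<lambda>q. dual_coeff \<psi> u i j (g q)) \<eta>"
        by (rule pd_cong_open[OF V_open \<eta>]) (simp add: eq2_coeff_legendre[OF _ ij \<psi>])
      then show ?thesis
        unfolding dual_coeff_dxi_def
        using pd_compose_g[OF smooth2_dual_coeff[OF \<Omega>_open u_smooth hessdet_pos \<psi>] \<eta> ij(2)] by simp
    qed
    have "pd i (pd j (\<lambda>q. hessdet ustar q * deriv (psi_star \<psi>) (hessdet ustar q) * hessinv ustar i j q)) y0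
       = pd i (\<lambda>q. dual_coeff_dxi \<psi> u i j (g q)) y0"
      by (rule pd_cong_open[OF V_open y0]) (simp add: inner)
    then show ?thesis
      using pd_compose_g[OF smooth2_dual_coeff_dxi[OF \<Omega>_open u_smooth hessdet_pos \<psi>] y0 ij(1)] by simp
  qed
  then show ?thesis unfolding eq2_lhs_def dual_operator_def by simp
qed

end

locale eq2_primal =
  fixes \<Omega> :: "(real \<times> real) set" and u :: "real \<times> real \<Rightarrow> real" and \<psi> :: "real \<Rightarrow> real"
  assumes \<Omega>_open: "open \<Omega>" and u_smooth: "smooth2_on \<Omega> u" and hessdet_pos: "\<forall>p\<in>\<Omega>. hessdet u p > 0"
    and psi_smooth: "smooth1_on {0<..} \<psi>"
begin

abbreviation "J \<equiv> hessdet u"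
definition "dpsiJ x = deriv \<psi> (J x)"
definition "dual_factor x = \<psi> (J x) * inverse (J x) - dpsiJ x"

lemma smooth2_J: "smooth2_on \<Omega> J" by (rule smooth2_hessdet[OF \<Omega>_open u_smooth])
lemma J_pos: "x \<in> \<Omega> \<Longrightarrow> J x \<in> {0<..}" using hessdet_pos by simp
lemma hess_differentiable: "x \<in> \<Omega> \<Longrightarrow> hess u i j differentiable (at x)"
  using smooth2_diff[OF smooth2_hess[OF u_smooth]] .
lemma J_differentiable: "x \<in> \<Omega> \<Longrightarrow> J differentiable (at x)" using smooth2_diff[OF smooth2_J] .

lemma smooth2_dpsiJ: "smooth2_on \<Omega> dpsiJ"
  unfolding dpsiJ_def[abs_def] by (rule smooth2_comp1[OF \<Omega>_open smooth1_deriv[OF psi_smooth] smooth2_J J_pos])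
lemma pd_dpsiJ_differentiable: "x \<in> \<Omega> \<Longrightarrow> pd j dpsiJ differentiable (at x)"
  using smooth2_diff[OF smooth2_pd[OF smooth2_dpsiJ]] .
lemma hesscof_differentiable: "x \<in> \<Omega> \<Longrightarrow> hesscof u i j differentiable (at x)"
  using smooth2_diff[OF smooth2_hesscof[OF \<Omega>_open u_smooth]] .

lemma pd_J: "x \<in> \<Omega> \<Longrightarrow> pd l J x = pd l (hess u 1 1) x * hess u 2 2 x + hess u 1 1 x * pd l (hess u 2 2) x
    - (pd l (hess u 1 2) x * hess u 2 1 x + hess u 1 2 x * pd l (hess u 2 1) x)"
proof -
  assume x: "x \<in> \<Omega>"
  have "J = (\<lambda>p. hess u 1 1 p * hess u 2 2 p - hess u 1 2 p * hess u 2 1 p)"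
    by (rule ext) (simp add: hessdet_def)
  then have e: "pd l J x = pd l (\<lambda>p. hess u 1 1 p * hess u 2 2 p - hess u 1 2 p * hess u 2 1 p) x" by simp
  show ?thesis unfolding e
    using pd_diff[OF differentiable_mult[OF hess_differentiable[OF x] hess_differentiable[OF x]] differentiable_mult[OF hess_differentiable[OF x] hess_differentiable[OF x]]]
      pd_mult[OF hess_differentiable[OF x] hess_differentiable[OF x]] by simp
qed

lemma pd_dual_factor: "x \<in> \<Omega> \<Longrightarrow> pd l dual_factor x = deriv \<psi> (J x) * pd l J x * inverse (J x)
    + \<psi> (J x) * ((-1) * inverse (J x) * inverse (J x) * pd l J x) - pd l dpsiJ x"
proof -
  assume x: "x \<in> \<Omega>"
  have d1: "(\<lambda>x. \<psi> (J x)) differentiable (at x)"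
    using differentiable_compose[of \<psi> J x UNIV] J_differentiable[OF x] smooth1_has_derivative[OF psi_smooth J_pos[OF x]] real_differentiable_def by blast
  have d2: "(\<lambda>x. inverse (J x)) differentiable (at x)"
    using differentiable_compose[of inverse J x UNIV] J_differentiable[OF x] has_real_derivative_inverse[of "J x"] hessdet_pos x real_differentiable_def by fastforce
  have d3: "dpsiJ differentiable (at x)" using smooth2_diff[OF smooth2_dpsiJ x] .
  have e: "pd l dual_factor x = pd l (\<lambda>x. \<psi> (J x)) x * inverse (J x) + \<psi> (J x) * pd l (\<lambda>x. inverse (J x)) x - pd l dpsiJ x"
    unfolding dual_factor_def[abs_def]
    using pd_diff[OF differentiable_mult[OF d1 d2] d3] pd_mult[OF d1 d2] by simp
  have J0: "J x \<noteq> 0" using hessdet_pos x by fastforce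
  show ?thesis unfolding e
    using pd_chain_real[OF smooth1_has_derivative[OF psi_smooth J_pos[OF x]] J_differentiable[OF x]] pd_chain_real[OF has_real_derivative_inverse[OF J0] J_differentiable[OF x]]
    by (simp add: algebra_simps)
qed

lemma smooth2_dual_factor: "smooth2_on \<Omega> dual_factor"
proof -
  have iJ: "smooth2_on \<Omega> (\<lambda>x. inverse (J x))"
    by (rule smooth2_inverse[OF \<Omega>_open smooth2_J]) (use hessdet_pos in blast)
  have "smooth2_on \<Omega> (\<lambda>x. \<psi> (J x) * inverse (J x) - dpsiJ x)"
    by (intro smooth2_sub smooth2_mult \<Omega>_open smooth2_dpsiJ smooth2_comp1[OF \<Omega>_open psi_smooth smooth2_J J_pos] iJ)
  then show ?thesis unfolding dual_factor_def[abs_def] .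
qed

lemma dual_coeff_eq: "dual_coeff \<psi> u i j = (\<lambda>x. dual_factor x * hess u j i x)"
  by (rule ext) (simp add: dual_coeff_def dual_factor_def dpsiJ_def)

lemma pd_dual_coeff: "x \<in> \<Omega> \<Longrightarrow>
    pd l (dual_coeff \<psi> u i j) x = pd l dual_factor x * hess u j i x + dual_factor x * pd l (hess u j i) x"
  unfolding dual_coeff_eq by (rule pd_mult[OF smooth2_diff[OF smooth2_dual_factor] hess_differentiable])

text \<open>Jacobi's formula \<open>\<Sum>\<^sub>j\<^sub>l u\<^sup>l\<^sup>j \<partial>\<^sub>l u\<^sub>j\<^sub>i = \<Sum>\<^sub>j\<^sub>l u\<^sup>l\<^sup>j \<partial>\<^sub>i u\<^sub>j\<^sub>l = \<partial>\<^sub>i J / J\<close>, using the symmetry of the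
  third derivatives.\<close>
lemma jacobi_formula:
  assumes x: "x \<in> \<Omega>" and i: "i = 1 \<or> i = 2"
  shows "(\<Sum>j\<in>{1,2}. \<Sum>l\<in>{1,2}. pd l (hess u j i) x * hessinv u l j x) = pd i J x * inverse (J x)"
proof -
  have J0: "J x \<noteq> 0" using hessdet_pos x by fastforce
  note sym = hess_sym[OF \<Omega>_open u_smooth x, of 2 1] pd_hess21[OF \<Omega>_open u_smooth x]
    pd2_hess11[OF \<Omega>_open u_smooth x] pd1_hess22[OF \<Omega>_open u_smooth x]
  show ?thesis
    using i J0 by (auto simp: pd_J[OF x] hessinv_def sym field_simps)
qed

text \<open>The key computation: \<open>\<Sum>\<^sub>j \<partial>/\<partial>\<xi>\<^sub>j\<close> of the dual coefficients \<open>G u\<^sub>j\<^sub>i\<close>, \<open>G = \<psi>(J)/J - \<psi>'(J)\<close>,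
  is \<open>\<partial>\<^sub>i G + G \<partial>\<^sub>i J / J = -\<partial>\<^sub>i(\<psi>'(J))\<close>.\<close>
lemma dual_coeff_dxi_sum:
  assumes x: "x \<in> \<Omega>" and i: "i = 1 \<or> i = 2"
  shows "dual_coeff_dxi \<psi> u i 1 x + dual_coeff_dxi \<psi> u i 2 x = - pd i dpsiJ x"
proof -
  have J0: "J x \<noteq> 0" using hessdet_pos x by fastforce
  have "dual_coeff_dxi \<psi> u i 1 x + dual_coeff_dxi \<psi> u i 2 x
      = (\<Sum>l\<in>{1,2}. pd l dual_factor x * (\<Sum>j\<in>{1,2}. hessinv u l j x * hess u j i x))
        + dual_factor x * (\<Sum>j\<in>{1,2}. \<Sum>l\<in>{1,2}. pd l (hess u j i) x * hessinv u l j x)"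
    unfolding dual_coeff_dxi_def pd_dual_coeff[OF x] by (simp add: algebra_simps)
  also have "\<dots> = pd i dual_factor x + dual_factor x * (pd i J x * inverse (J x))"
    using hessinv_hess[OF J0 _ i] jacobi_formula[OF x i] i by auto
  also have "\<dots> = - pd i dpsiJ x"
    unfolding pd_dual_factor[OF x] dual_factor_def dpsiJ_def using J0 by (simp add: field_simps)
  finally show ?thesis .
qed

definition "eq2_coeff i j q = J q * deriv \<psi> (J q) * hessinv u i j q"

lemma eq2_coeff_eq: "q \<in> \<Omega> \<Longrightarrow> eq2_coeff i j q = dpsiJ q * hesscof u i j q"
  unfolding eq2_coeff_def dpsiJ_def hessinv_hesscof using hessdet_pos by fastforce

lemma smooth2_eq2_coeff: "smooth2_on \<Omega> (eq2_coeff i j)"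
  by (rule smooth2_cong[OF \<Omega>_open smooth2_mult[OF \<Omega>_open smooth2_dpsiJ smooth2_hesscof[OF \<Omega>_open u_smooth, of i j]]]) (simp add: eq2_coeff_eq)

lemma pd_eq2_coeff: "x \<in> \<Omega> \<Longrightarrow> pd j (eq2_coeff i j) x = pd j dpsiJ x * hesscof u i j x + dpsiJ x * pd j (hesscof u i j) x"
proof -
  assume x: "x \<in> \<Omega>"
  have "pd j (eq2_coeff i j) x = pd j (\<lambda>q. dpsiJ q * hesscof u i j q) x" by (rule pd_cong_open[OF \<Omega>_open x]) (simp add: eq2_coeff_eq)
  also have "\<dots> = pd j dpsiJ x * hesscof u i j x + dpsiJ x * pd j (hesscof u i j) x" by (rule pd_mult[OF smooth2_diff[OF smooth2_dpsiJ x] hesscof_differentiable[OF x]])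
  finally show ?thesis .
qed

text \<open>Since the cofactor rows are divergence free, \<open>\<Sum>\<^sub>j \<partial>\<^sub>j(\<psi>'(J)cof\<^sup>i\<^sup>j) = \<Sum>\<^sub>j cof\<^sup>i\<^sup>j \<partial>\<^sub>j(\<psi>'(J))\<close>;
  this is differentiated once more.\<close>
lemma div_eq2_coeff_row:
  assumes x0: "x0 \<in> \<Omega>" and i: "i = 1 \<or> i = 2"
  shows "pd i (pd 1 (eq2_coeff i 1)) x0 + pd i (pd 2 (eq2_coeff i 2)) x0
     = pd i (pd 1 dpsiJ) x0 * hesscof u i 1 x0 + pd 1 dpsiJ x0 * pd i (hesscof u i 1) x0
     + (pd i (pd 2 dpsiJ) x0 * hesscof u i 2 x0 + pd 2 dpsiJ x0 * pd i (hesscof u i 2) x0)"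
proof -
  have row_div: "pd 1 (eq2_coeff i 1) x + pd 2 (eq2_coeff i 2) x
      = pd 1 dpsiJ x * hesscof u i 1 x + pd 2 dpsiJ x * hesscof u i 2 x" if x: "x \<in> \<Omega>" for x
  proof -
    have "dpsiJ x * pd 1 (hesscof u i 1) x + dpsiJ x * pd 2 (hesscof u i 2) x = 0"
      using hesscof_div_row[OF \<Omega>_open u_smooth x i] by (simp add: distrib_left[symmetric])
    then show ?thesis using pd_eq2_coeff[OF x, of 1 i] pd_eq2_coeff[OF x, of 2 i] by (simp add: algebra_simps)
  qed
  have "pd i (pd 1 (eq2_coeff i 1)) x0 + pd i (pd 2 (eq2_coeff i 2)) x0 = pd i (\<lambda>x. pd 1 (eq2_coeff i 1) x + pd 2 (eq2_coeff i 2) x) x0"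
    by (rule pd_add[symmetric]) (rule smooth2_diff[OF smooth2_pd[OF smooth2_eq2_coeff] x0])+
  also have "\<dots> = pd i (\<lambda>x. pd 1 dpsiJ x * hesscof u i 1 x + pd 2 dpsiJ x * hesscof u i 2 x) x0"
    by (rule pd_cong_open[OF \<Omega>_open x0]) (simp add: row_div)
  also have "\<dots> = pd i (pd 1 dpsiJ) x0 * hesscof u i 1 x0 + pd 1 dpsiJ x0 * pd i (hesscof u i 1) x0
     + (pd i (pd 2 dpsiJ) x0 * hesscof u i 2 x0 + pd 2 dpsiJ x0 * pd i (hesscof u i 2) x0)"
    by (simp add: pd_add pd_mult pd_dpsiJ_differentiable[OF x0] hesscof_differentiable[OF x0])
  finally show ?thesis .
qed

lemma dual_operator_row:
  assumes x0: "x0 \<in> \<Omega>" and i: "i = 1 \<or> i = 2"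
  shows "(\<Sum>j\<in>{1,2}. pd 1 (dual_coeff_dxi \<psi> u i j) x0 * hessinv u 1 i x0 + pd 2 (dual_coeff_dxi \<psi> u i j) x0 * hessinv u 2 i x0)
     = - (pd 1 (pd i dpsiJ) x0 * hessinv u 1 i x0 + pd 2 (pd i dpsiJ) x0 * hessinv u 2 i x0)"
proof -
  have m: "pd m (dual_coeff_dxi \<psi> u i 1) x0 + pd m (dual_coeff_dxi \<psi> u i 2) x0 = - pd m (pd i dpsiJ) x0" for m
  proof -
    have "pd m (dual_coeff_dxi \<psi> u i 1) x0 + pd m (dual_coeff_dxi \<psi> u i 2) x0 = pd m (\<lambda>x. dual_coeff_dxi \<psi> u i 1 x + dual_coeff_dxi \<psi> u i 2 x) x0"
      by (rule pd_add[symmetric]) (rule smooth2_diff[OF smooth2_dual_coeff_dxi[OF \<Omega>_open u_smooth hessdet_pos psi_smooth] x0])+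
    also have "\<dots> = pd m (\<lambda>x. - pd i dpsiJ x) x0"
      by (rule pd_cong_open[OF \<Omega>_open x0]) (simp add: dual_coeff_dxi_sum[OF _ i])
    also have "\<dots> = - pd m (pd i dpsiJ) x0" by (rule pd_neg[OF pd_dpsiJ_differentiable[OF x0]])
    finally show ?thesis .
  qed
  have "(\<Sum>j\<in>{1,2}. pd 1 (dual_coeff_dxi \<psi> u i j) x0 * hessinv u 1 i x0 + pd 2 (dual_coeff_dxi \<psi> u i j) x0 * hessinv u 2 i x0)
     = (pd 1 (dual_coeff_dxi \<psi> u i 1) x0 + pd 1 (dual_coeff_dxi \<psi> u i 2) x0) * hessinv u 1 i x0
       + (pd 2 (dual_coeff_dxi \<psi> u i 1) x0 + pd 2 (dual_coeff_dxi \<psi> u i 2) x0) * hessinv u 2 i x0"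
    by (simp add: algebra_simps)
  also have "\<dots> = (- pd 1 (pd i dpsiJ) x0) * hessinv u 1 i x0 + (- pd 2 (pd i dpsiJ) x0) * hessinv u 2 i x0"
    unfolding m ..
  finally show ?thesis by simp
qed

text \<open>The primal operator is \<open>-J\<close> times the dual operator, both being \<open>\<Sum> cof\<^sup>i\<^sup>j \<partial>\<^sub>i\<partial>\<^sub>j(\<psi>'(J))\<close> up
  to the factor \<open>-1/J\<close>.\<close>
lemma eq2_lhs_primal:
  assumes x0: "x0 \<in> \<Omega>"
  shows "eq2_lhs \<psi> u x0 = - J x0 * dual_operator \<psi> u x0"
proof -
  have coeff_eq: "(\<lambda>q. hessdet u q * deriv \<psi> (hessdet u q) * hessinv u i j q) = eq2_coeff i j" for i j
    by (rule ext) (simp add: eq2_coeff_def)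
  have expand: "eq2_lhs \<psi> u x0 = (pd 1 (pd 1 (eq2_coeff 1 1)) x0 + pd 1 (pd 2 (eq2_coeff 1 2)) x0)
      + (pd 2 (pd 1 (eq2_coeff 2 1)) x0 + pd 2 (pd 2 (eq2_coeff 2 2)) x0)"
    unfolding eq2_lhs_def coeff_eq by simp
  have col1: "pd 1 dpsiJ x0 * pd 1 (hesscof u 1 1) x0 + pd 1 dpsiJ x0 * pd 2 (hesscof u 2 1) x0 = 0"
    using hesscof_div_col[OF \<Omega>_open u_smooth x0, of 1] by (simp add: distrib_left[symmetric])
  have col2: "pd 2 dpsiJ x0 * pd 1 (hesscof u 1 2) x0 + pd 2 dpsiJ x0 * pd 2 (hesscof u 2 2) x0 = 0"
    using hesscof_div_col[OF \<Omega>_open u_smooth x0, of 2] by (simp add: distrib_left[symmetric])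
  have nondivergence: "eq2_lhs \<psi> u x0 = pd 1 (pd 1 dpsiJ) x0 * hesscof u 1 1 x0 + pd 1 (pd 2 dpsiJ) x0 * hesscof u 1 2 x0
      + pd 2 (pd 1 dpsiJ) x0 * hesscof u 2 1 x0 + pd 2 (pd 2 dpsiJ) x0 * hesscof u 2 2 x0"
    unfolding expand div_eq2_coeff_row[OF x0, of 1, simplified] div_eq2_coeff_row[OF x0, of 2, simplified]
    using col1 col2 by (simp add: algebra_simps)
  have dual_expand: "dual_operator \<psi> u x0 = - (pd 1 (pd 1 dpsiJ) x0 * hessinv u 1 1 x0 + pd 2 (pd 1 dpsiJ) x0 * hessinv u 2 1 x0)
       - (pd 1 (pd 2 dpsiJ) x0 * hessinv u 1 2 x0 + pd 2 (pd 2 dpsiJ) x0 * hessinv u 2 2 x0)"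
    using dual_operator_row[OF x0, of 1, simplified] dual_operator_row[OF x0, of 2, simplified] unfolding dual_operator_def by simp
  have J0: "J x0 \<noteq> 0" using hessdet_pos x0 by fastforce
  show ?thesis unfolding nondivergence dual_expand hessinv_hesscof using J0 by (simp add: field_simps)
qed

end

text \<open>Both sides are multiples of \<open>dual_operator \<psi> u x\<^sub>0\<close>, with the nonzero factors \<open>-J\<close>
  and \<open>1\<close>.\<close>
lemma eq2_lhs_legendre_iff:
  assumes \<psi>: "smooth1_on {0<..} \<psi>"
    and \<Omega>: "open \<Omega>" and u: "smooth2_on \<Omega> u" and J: "\<forall>p\<in>\<Omega>. hessdet u p > 0"
    and leg: "is_legendre_transform \<Omega> u ustar" and x0: "x0 \<in> \<Omega>"
  shows "eq2_lhs \<psi> u x0 = 0 \<longleftrightarrow> eq2_lhs (psi_star \<psi>) ustar (grad u x0) = 0"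
proof -
  have J_nonzero: "\<forall>p\<in>\<Omega>. hessdet u p \<noteq> 0" using J by fastforce
  obtain V g where V: "open V" "grad u x0 \<in> V" "\<And>y. y \<in> V \<Longrightarrow> g y \<in> \<Omega>" "g (grad u x0) = x0"
    "\<And>y. y \<in> V \<Longrightarrow> grad u (g y) = y" "\<And>y. y \<in> V \<Longrightarrow> g differentiable (at y)"
    using grad_local_inverse[OF \<Omega> u J_nonzero x0] by blast
  interpret legendre_chart \<Omega> u ustar V g
    by unfold_locales (use \<Omega> u J leg V in auto)
  interpret eq2_primal \<Omega> u \<psi>
    by unfold_locales (use \<Omega> u J \<psi> in auto)
  have "eq2_lhs (psi_star \<psi>) ustar (grad u x0) = dual_operator \<psi> u x0"
    using eq2_lhs_legendre[OF V(2) \<psi>] V(4) by simp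
  then show ?thesis unfolding eq2_lhs_primal[OF x0] using J_nonzero x0 by simp
qed

theorem mainTheorem6:
  fixes \<psi> :: "real \<Rightarrow> real"
    and u ustar :: "real \<times> real \<Rightarrow> real"
    and \<Omega> :: "(real \<times> real) set"
  assumes psi_smooth: "smooth1_on {0<..} \<psi>"
    and psi_convex: "strict_convex_on {0<..} \<psi>"
    and dom: "open \<Omega>" "convex \<Omega>"
    and u_smooth: "smooth2_on \<Omega> u"
    and u_convex: "strict_convex_on \<Omega> u"
    and u_nondeg: "\<forall>p\<in>\<Omega>. hess u 1 1 p > 0 \<and> hessdet u p > 0"
    and leg: "is_legendre_transform \<Omega> u ustar"
  shows "smooth1_on {0<..} (psi_star \<psi>) \<and> strict_convex_on {0<..} (psi_star \<psi>) \<and>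
         (satisfies_eq2 \<psi> \<Omega> u \<longleftrightarrow> satisfies_eq2 (psi_star \<psi>) (grad u ` \<Omega>) ustar)"
proof (intro conjI)
  show "smooth1_on {0<..} (psi_star \<psi>)" by (rule psi_star_smooth[OF psi_smooth])
  show "strict_convex_on {0<..} (psi_star \<psi>)" by (rule psi_star_convex[OF psi_convex])
  have "\<forall>p\<in>\<Omega>. hessdet u p > 0" using u_nondeg by blast
  then have "eq2_lhs \<psi> u x = 0 \<longleftrightarrow> eq2_lhs (psi_star \<psi>) ustar (grad u x) = 0" if "x \<in> \<Omega>" for x
    using eq2_lhs_legendre_iff[OF psi_smooth dom(1) u_smooth _ leg that] by blast
  then show "satisfies_eq2 \<psi> \<Omega> u \<longleftrightarrow> satisfies_eq2 (psi_star \<psi>) (grad u ` \<Omega>) ustar"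
    unfolding satisfies_eq2_def by blast
qed

end
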